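(* Let $H$ be a weak Hopf algebra, let $E_h=[h_1][S(h_2)]\in{H_{par}^w}$ for $h\in H$, and let ${A_{par}^w}$ be the subalgebra of ${H_{par}^w}$ generated by $\{E_h: h\in H\}$. Then the linear map $H\otimes{A_{par}^w}\to{A_{par}^w}$, $h\otimes a\mapsto h\cdot a=[h_1]\,a\,[S(h_2)]$, is well defined and makes ${A_{par}^w}$ a symmetric partial $H$-module algebra.
   Context: All algebras are associative and unital over a field $\Bbbk$; Sweedler notation $\Delta(h)=h_1\otimes h_2$. A weak Hopf algebra is $(H,m,u,\Delta,\varepsilon,S)$ with $H$ an algebra, $(H,\Delta,\varepsilon)$ a coalgebra, and for all $g,h,k$: $\Delta(kh)=\Delta(k)\Delta(h)$; $\varepsilon(kh_1)\varepsilon(h_2g)=\varepsilon(khg)=\varepsilon(kh_2)\varepsilon(h_1g)$; $(1\otimes\Delta(1))(\Delta(1)\otimes1)=\Delta^2(1)=(\Delta(1)\otimes1)(1\otimes\Delta(1))$; $h_1S(h_2)=\varepsilon(1_1h)1_2$; $S(h_1)h_2=1_1\varepsilon(h1_2)$; $S(h)=S(h_1)h_2S(h_3)$, where $\Delta(1)=1_1\otimes1_2$. ${H_{par}^w}=T(H)/I$, where $T(H)$ is the tensor algebra of the vector space $H$ and $I$ is the ideal generated by, for all $h,k\in H$: $1_H-1_{T(H)}$; $h\otimes k_1\otimes S(k_2)-hk_1\otimes S(k_2)$; $h\otimes S(k_1)\otimes k_2-hS(k_1)\otimes k_2$; $h_1\otimes S(h_2)\otimes k-h_1\otimes S(h_2)k$;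 $S(h_1)\otimes h_2\otimes k-S(h_1)\otimes h_2k$; $h-h_1\otimes S(h_2)\otimes h_3$; $[h]$ denotes the class of $h$. A symmetric partial $H$-module algebra is an algebra $A$ with a linear map $h\otimes a\mapsto h\cdot a$ such that for all $h,k\in H$, $a,b\in A$: $h\cdot(ab)=(h_1\cdot a)(h_2\cdot b)$; $1_H\cdot a=a$; $h\cdot(k\cdot a)=(h_1\cdot1_A)((h_2k)\cdot a)$; $h\cdot(k\cdot a)=((h_1k)\cdot a)(h_2\cdot1_A)$. *)

theory Defs
  imports Complex_Main "HOL-Library.Poly_Mapping"
begin

text \<open>An element sum_i x_i (x) y_i of H (x) H is
  represented by the list of pairs (x_i, y_i); two such lists denote the same tensor iff all
  bilinear forms H x H -> k take the same value on them (over a field this is exactly equality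
  in the tensor product). Likewise for three-fold tensors with trilinear forms.\<close>

definition bilinear_form :: "('k::field \<Rightarrow> 'h::ab_group_add \<Rightarrow> 'h) \<Rightarrow> ('h \<Rightarrow> 'h \<Rightarrow> 'k) \<Rightarrow> bool" where
  "bilinear_form sc \<beta> \<longleftrightarrow>
     (\<forall>x x' y. \<beta> (x + x') y = \<beta> x y + \<beta> x' y) \<and>
     (\<forall>x y y'. \<beta> x (y + y') = \<beta> x y + \<beta> x y') \<and>
     (\<forall>c x y. \<beta> (sc c x) y = c * \<beta> x y) \<and>
     (\<forall>c x y. \<beta> x (sc c y) = c * \<beta> x y)"

definition trilinear_form :: "('k::field \<Rightarrow> 'h::ab_group_add \<Rightarrow> 'h) \<Rightarrow> ('h \<Rightarrow> 'h \<Rightarrow> 'h \<Rightarrow> 'k) \<Rightarrow> bool" where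
  "trilinear_form sc \<tau> \<longleftrightarrow>
     (\<forall>x x' y z. \<tau> (x + x') y z = \<tau> x y z + \<tau> x' y z) \<and>
     (\<forall>x y y' z. \<tau> x (y + y') z = \<tau> x y z + \<tau> x y' z) \<and>
     (\<forall>x y z z'. \<tau> x y (z + z') = \<tau> x y z + \<tau> x y z') \<and>
     (\<forall>c x y z. \<tau> (sc c x) y z = c * \<tau> x y z) \<and>
     (\<forall>c x y z. \<tau> x (sc c y) z = c * \<tau> x y z) \<and>
     (\<forall>c x y z. \<tau> x y (sc c z) = c * \<tau> x y z)"

definition teq2 :: "('k::field \<Rightarrow> 'h::ab_group_add \<Rightarrow> 'h) \<Rightarrow> ('h \<times> 'h) list \<Rightarrow> ('h \<times> 'h) list \<Rightarrow> bool" where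
  "teq2 sc t u \<longleftrightarrow> (\<forall>\<beta>. bilinear_form sc \<beta> \<longrightarrow>
     (\<Sum>(x,y)\<leftarrow>t. \<beta> x y) = (\<Sum>(x,y)\<leftarrow>u. \<beta> x y))"

definition teq3 :: "('k::field \<Rightarrow> 'h::ab_group_add \<Rightarrow> 'h) \<Rightarrow> ('h \<times> 'h \<times> 'h) list \<Rightarrow> ('h \<times> 'h \<times> 'h) list \<Rightarrow> bool" where
  "teq3 sc t u \<longleftrightarrow> (\<forall>\<tau>. trilinear_form sc \<tau> \<longrightarrow>
     (\<Sum>(x,y,z)\<leftarrow>t. \<tau> x y z) = (\<Sum>(x,y,z)\<leftarrow>u. \<tau> x y z))"

definition tmul2 :: "('h::times \<times> 'h) list \<Rightarrow> ('h \<times> 'h) list \<Rightarrow> ('h \<times> 'h) list" where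
  "tmul2 t u = concat (map (\<lambda>(a,b). map (\<lambda>(c,d). (a * c, b * d)) u) t)"

definition tmul3 :: "('h::times \<times> 'h \<times> 'h) list \<Rightarrow> ('h \<times> 'h \<times> 'h) list \<Rightarrow> ('h \<times> 'h \<times> 'h) list" where
  "tmul3 t u = concat (map (\<lambda>(a,b,c). map (\<lambda>(a',b',c'). (a * a', b * b', c * c')) u) t)"

definition delta2L :: "('h \<Rightarrow> ('h \<times> 'h) list) \<Rightarrow> 'h \<Rightarrow> ('h \<times> 'h \<times> 'h) list" where
  "delta2L \<Delta> h = concat (map (\<lambda>(x,y). map (\<lambda>(a,b). (a, b, y)) (\<Delta> x)) (\<Delta> h))"

definition delta2R :: "('h \<Rightarrow> ('h \<times> 'h) list) \<Rightarrow> 'h \<Rightarrow> ('h \<times> 'h \<times> 'h) list" where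
  "delta2R \<Delta> h = concat (map (\<lambda>(x,y). map (\<lambda>(b,c). (x, b, c)) (\<Delta> y)) (\<Delta> h))"

definition weak_hopf_algebra ::
  "('k::field \<Rightarrow> 'h::{ring,monoid_mult} \<Rightarrow> 'h) \<Rightarrow> ('h \<Rightarrow> ('h \<times> 'h) list) \<Rightarrow> ('h \<Rightarrow> 'k) \<Rightarrow> ('h \<Rightarrow> 'h) \<Rightarrow> bool" where
  "weak_hopf_algebra sc \<Delta> \<epsilon> S \<longleftrightarrow>
     \<comment> \<open>H is a k-algebra\<close>
     vector_space sc \<and>
     (\<forall>c x y. sc c (x * y) = sc c x * y) \<and>
     (\<forall>c x y. sc c (x * y) = x * sc c y) \<and>
     \<comment> \<open>Delta, epsilon, S are linear\<close>
     (\<forall>x y. teq2 sc (\<Delta> (x + y)) (\<Delta> x @ \<Delta> y)) \<and>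
     (\<forall>c x. teq2 sc (\<Delta> (sc c x)) (map (\<lambda>(a,b). (sc c a, b)) (\<Delta> x))) \<and>
     (\<forall>x y. \<epsilon> (x + y) = \<epsilon> x + \<epsilon> y) \<and>
     (\<forall>c x. \<epsilon> (sc c x) = c * \<epsilon> x) \<and>
     (\<forall>x y. S (x + y) = S x + S y) \<and>
     (\<forall>c x. S (sc c x) = sc c (S x)) \<and>
     \<comment> \<open>(H, Delta, epsilon) is a coalgebra\<close>
     (\<forall>h. teq3 sc (delta2L \<Delta> h) (delta2R \<Delta> h)) \<and>
     (\<forall>h. (\<Sum>(x,y)\<leftarrow>\<Delta> h. sc (\<epsilon> x) y) = h) \<and>
     (\<forall>h. (\<Sum>(x,y)\<leftarrow>\<Delta> h. sc (\<epsilon> y) x) = h) \<and>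
     \<comment> \<open>Delta(kh) = Delta(k) Delta(h)\<close>
     (\<forall>k h. teq2 sc (\<Delta> (k * h)) (tmul2 (\<Delta> k) (\<Delta> h))) \<and>
     \<comment> \<open>weak multiplicativity of the counit\<close>
     (\<forall>k h g. (\<Sum>(x,y)\<leftarrow>\<Delta> h. \<epsilon> (k * x) * \<epsilon> (y * g)) = \<epsilon> (k * h * g)) \<and>
     (\<forall>k h g. (\<Sum>(x,y)\<leftarrow>\<Delta> h. \<epsilon> (k * y) * \<epsilon> (x * g)) = \<epsilon> (k * h * g)) \<and>
     \<comment> \<open>weak comultiplicativity of the unit\<close>
     teq3 sc (tmul3 (map (\<lambda>(a,b). (1, a, b)) (\<Delta> 1)) (map (\<lambda>(a,b). (a, b, 1)) (\<Delta> 1)))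
             (delta2L \<Delta> 1) \<and>
     teq3 sc (tmul3 (map (\<lambda>(a,b). (a, b, 1)) (\<Delta> 1)) (map (\<lambda>(a,b). (1, a, b)) (\<Delta> 1)))
             (delta2L \<Delta> 1) \<and>
     \<comment> \<open>antipode axioms\<close>
     (\<forall>h. (\<Sum>(x,y)\<leftarrow>\<Delta> h. x * S y) = (\<Sum>(a,b)\<leftarrow>\<Delta> 1. sc (\<epsilon> (a * h)) b)) \<and>
     (\<forall>h. (\<Sum>(x,y)\<leftarrow>\<Delta> h. S x * y) = (\<Sum>(a,b)\<leftarrow>\<Delta> 1. sc (\<epsilon> (h * b)) a)) \<and>
     (\<forall>h. S h = (\<Sum>(x,y,z)\<leftarrow>delta2L \<Delta> h. S x * y * S z))"

text \<open>Elements of the free (noncommutative) k-algebra on the set H are finitely supported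
  k-valued functions on words over H. T(H) is its quotient by the linearity relations
  [h + h'] = [h] + [h'], [c h] = c [h]; hence H_par^w = T(H)/I is the quotient of the free
  algebra by the ideal generated by the linearity relations together with the relations of I.\<close>

type_synonym ('h, 'k) free_alg = "'h list \<Rightarrow>\<^sub>0 'k"

definition fmul :: "('h, 'k::field) free_alg \<Rightarrow> ('h, 'k) free_alg \<Rightarrow> ('h, 'k) free_alg" where
  "fmul p q = (\<Sum>u\<in>Poly_Mapping.keys p. \<Sum>v\<in>Poly_Mapping.keys q. Poly_Mapping.single (u @ v) (Poly_Mapping.lookup p u * Poly_Mapping.lookup q v))"

definition fsc :: "'k::field \<Rightarrow> ('h, 'k) free_alg \<Rightarrow> ('h, 'k) free_alg" where
  "fsc c p = Poly_Mapping.map (\<lambda>v. c * v) p"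

definition funit :: "('h, 'k::field) free_alg" where
  "funit = Poly_Mapping.single [] 1"

definition gen :: "'h \<Rightarrow> ('h, 'k::field) free_alg" where
  "gen h = Poly_Mapping.single [h] 1"

definition par_rels ::
  "('k::field \<Rightarrow> 'h::{ring,monoid_mult} \<Rightarrow> 'h) \<Rightarrow> ('h \<Rightarrow> ('h \<times> 'h) list) \<Rightarrow> ('h \<Rightarrow> 'h) \<Rightarrow> ('h, 'k) free_alg set" where
  "par_rels sc \<Delta> S =
     {gen (h + h') - gen h - gen h' | h h'. True} \<union>
     {gen (sc c h) - fsc c (gen h) | c h. True} \<union>
     {gen 1 - funit} \<union>
     {(\<Sum>(x,y)\<leftarrow>\<Delta> k. fmul (fmul (gen h) (gen x)) (gen (S y)) - fmul (gen (h * x)) (gen (S y))) | h k. True} \<union>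
     {(\<Sum>(x,y)\<leftarrow>\<Delta> k. fmul (fmul (gen h) (gen (S x))) (gen y) - fmul (gen (h * S x)) (gen y)) | h k. True} \<union>
     {(\<Sum>(x,y)\<leftarrow>\<Delta> h. fmul (fmul (gen x) (gen (S y))) (gen k) - fmul (gen x) (gen (S y * k))) | h k. True} \<union>
     {(\<Sum>(x,y)\<leftarrow>\<Delta> h. fmul (fmul (gen (S x)) (gen y)) (gen k) - fmul (gen (S x)) (gen (y * k))) | h k. True} \<union>
     {gen h - (\<Sum>(x,y,z)\<leftarrow>delta2L \<Delta> h. fmul (fmul (gen x) (gen (S y))) (gen z)) | h. True}"

inductive_set fideal :: "('h, 'k::field) free_alg set \<Rightarrow> ('h, 'k) free_alg set"
  for R :: "('h, 'k) free_alg set" where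
  zero: "0 \<in> fideal R"
| gen: "r \<in> R \<Longrightarrow> fmul (fmul (Poly_Mapping.single u c) r) (Poly_Mapping.single v 1) \<in> fideal R"
| add: "p \<in> fideal R \<Longrightarrow> q \<in> fideal R \<Longrightarrow> p + q \<in> fideal R"

definition par_eq :: "('k::field \<Rightarrow> 'h::{ring,monoid_mult} \<Rightarrow> 'h) \<Rightarrow> ('h \<Rightarrow> ('h \<times> 'h) list) \<Rightarrow> ('h \<Rightarrow> 'h)
    \<Rightarrow> ('h, 'k) free_alg \<Rightarrow> ('h, 'k) free_alg \<Rightarrow> bool" where
  "par_eq sc \<Delta> S p q \<longleftrightarrow> p - q \<in> fideal (par_rels sc \<Delta> S)"

definition Eh :: "('h::{ring,monoid_mult} \<Rightarrow> ('h \<times> 'h) list) \<Rightarrow> ('h \<Rightarrow> 'h) \<Rightarrow> 'h \<Rightarrow> ('h, 'k::field) free_alg" where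
  "Eh \<Delta> S h = (\<Sum>(x,y)\<leftarrow>\<Delta> h. fmul (gen x) (gen (S y)))"

text \<open>A_par^w: the (unital) subalgebra of H_par^w generated by the E_h, given as the set of all
  representatives (in the free algebra) of its elements.\<close>
inductive_set Apar :: "('k::field \<Rightarrow> 'h::{ring,monoid_mult} \<Rightarrow> 'h) \<Rightarrow> ('h \<Rightarrow> ('h \<times> 'h) list) \<Rightarrow> ('h \<Rightarrow> 'h)
    \<Rightarrow> ('h, 'k) free_alg set"
  for sc \<Delta> S where
  E: "Eh \<Delta> S h \<in> Apar sc \<Delta> S"
| unit: "funit \<in> Apar sc \<Delta> S"
| add: "p \<in> Apar sc \<Delta> S \<Longrightarrow> q \<in> Apar sc \<Delta> S \<Longrightarrow> p + q \<in> Apar sc \<Delta> S"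
| smult: "p \<in> Apar sc \<Delta> S \<Longrightarrow> fsc c p \<in> Apar sc \<Delta> S"
| mult: "p \<in> Apar sc \<Delta> S \<Longrightarrow> q \<in> Apar sc \<Delta> S \<Longrightarrow> fmul p q \<in> Apar sc \<Delta> S"
| cong: "q \<in> Apar sc \<Delta> S \<Longrightarrow> par_eq sc \<Delta> S p q \<Longrightarrow> p \<in> Apar sc \<Delta> S"

definition par_act :: "('h::{ring,monoid_mult} \<Rightarrow> ('h \<times> 'h) list) \<Rightarrow> ('h \<Rightarrow> 'h) \<Rightarrow> 'h
    \<Rightarrow> ('h, 'k::field) free_alg \<Rightarrow> ('h, 'k) free_alg" where
  "par_act \<Delta> S h a = (\<Sum>(x,y)\<leftarrow>\<Delta> h. fmul (fmul (gen x) a) (gen (S y)))"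

text \<open>An algebra A is given by a carrier set of representatives A, an equality relation eq
  (the equality of A, a congruence), addition (+ of the ambient type), a multiplication mul,
  a scalar multiplication smul, a unit one; and an action act.\<close>
definition sym_partial_module_algebra ::
  "('k::field \<Rightarrow> 'h::{ring,monoid_mult} \<Rightarrow> 'h) \<Rightarrow> ('h \<Rightarrow> ('h \<times> 'h) list)
   \<Rightarrow> 'a::monoid_add set \<Rightarrow> ('a \<Rightarrow> 'a \<Rightarrow> bool) \<Rightarrow> ('k \<Rightarrow> 'a \<Rightarrow> 'a) \<Rightarrow> ('a \<Rightarrow> 'a \<Rightarrow> 'a) \<Rightarrow> 'a
   \<Rightarrow> ('h \<Rightarrow> 'a \<Rightarrow> 'a) \<Rightarrow> bool" where
  "sym_partial_module_algebra sc \<Delta> A eq smul mul one act \<longleftrightarrow>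
     \<comment> \<open>the action is a well-defined linear map H (x) A -> A\<close>
     (\<forall>h a. a \<in> A \<longrightarrow> act h a \<in> A) \<and>
     (\<forall>h a a'. a \<in> A \<longrightarrow> a' \<in> A \<longrightarrow> eq a a' \<longrightarrow> eq (act h a) (act h a')) \<and>
     (\<forall>h h' a. a \<in> A \<longrightarrow> eq (act (h + h') a) (act h a + act h' a)) \<and>
     (\<forall>c h a. a \<in> A \<longrightarrow> eq (act (sc c h) a) (smul c (act h a))) \<and>
     (\<forall>h a b. a \<in> A \<longrightarrow> b \<in> A \<longrightarrow> eq (act h (a + b)) (act h a + act h b)) \<and>
     (\<forall>c h a. a \<in> A \<longrightarrow> eq (act h (smul c a)) (smul c (act h a))) \<and>
     \<comment> \<open>h.(ab) = (h_1.a)(h_2.b)\<close>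
     (\<forall>h a b. a \<in> A \<longrightarrow> b \<in> A \<longrightarrow>
        eq (act h (mul a b)) (\<Sum>(x,y)\<leftarrow>\<Delta> h. mul (act x a) (act y b))) \<and>
     \<comment> \<open>1_H.a = a\<close>
     (\<forall>a. a \<in> A \<longrightarrow> eq (act 1 a) a) \<and>
     \<comment> \<open>h.(k.a) = (h_1.1_A)((h_2 k).a)\<close>
     (\<forall>h k a. a \<in> A \<longrightarrow>
        eq (act h (act k a)) (\<Sum>(x,y)\<leftarrow>\<Delta> h. mul (act x one) (act (y * k) a))) \<and>
     \<comment> \<open>h.(k.a) = ((h_1 k).a)(h_2.1_A)\<close>
     (\<forall>h k a. a \<in> A \<longrightarrow>
        eq (act h (act k a)) (\<Sum>(x,y)\<leftarrow>\<Delta> h. mul (act (x * k) a) (act y one)))"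

end

theory Submission
  imports Defs
begin

text \<open>Equality in \<open>H\<^sub>p\<^sub>a\<^sub>r\<^sup>w\<close> is tested by the admissible functionals: the linear functionals on the
  free algebra over \<open>H\<close> that vanish on the defining ideal, which over a field separate the points of
  \<open>H\<^sub>p\<^sub>a\<^sub>r\<^sup>w\<close>. Each axiom of a symmetric partial module algebra thereby becomes an identity between
  iterated Sweedler sums of scalars. These are proved by the calculus of weak Hopf algebras
  (coassociativity, the two factorisations of \<open>\<Delta>\<^sup>2(1)\<close>, the counital maps \<open>\<epsilon>\<^sub>t\<close> and \<open>\<epsilon>\<^sub>s\<close>, and the
  anti-multiplicativity of \<open>S\<close>) together with the defining relations of \<open>H\<^sub>p\<^sub>a\<^sub>r\<^sup>w\<close>.

  The axioms involving products or iterated actions also need identities that hold only for elements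
  of \<open>A\<^sub>p\<^sub>a\<^sub>r\<^sup>w\<close>, not for all of \<open>H\<^sub>p\<^sub>a\<^sub>r\<^sup>w\<close>. They are established by induction over the generation
  of \<open>A\<^sub>p\<^sub>a\<^sub>r\<^sup>w\<close> from the \<open>E\<^sub>h\<close>, as three invariants: \<open>[h] a = [h\<^sub>1] a [S(h\<^sub>2)][h\<^sub>3]\<close>, \<open>[k\<^sub>1] a
  [S(k\<^sub>2)][n] = [k\<^sub>1] a [S(k\<^sub>2) n]\<close> and \<open>[x] (k \<cdot> a) = [x k\<^sub>1] a [S(k\<^sub>2)]\<close>.\<close>

section \<open>Linear functionals separate points\<close>

lemma separating_functional:
  fixes scale :: "'a::field \<Rightarrow> 'b::ab_group_add \<Rightarrow> 'b"
  assumes vs: "vector_space scale"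
    and sub: "module.subspace scale I" and v: "v \<notin> I"
  shows "\<exists>f. (\<forall>x y. f (x + y) = f x + f y) \<and> (\<forall>c x. f (scale c x) = c * f x)
           \<and> (\<forall>x\<in>I. f x = 0) \<and> f v = 1"
proof -
  interpret V: vector_space scale by (rule vs)
  interpret P: vector_space_pair scale "(*) :: 'a \<Rightarrow> 'a \<Rightarrow> 'a"
    by unfold_locales (auto simp: algebra_simps)
  obtain B where B: "B \<subseteq> I" "V.independent B" "I \<subseteq> V.span B"
    using V.maximal_independent_subset by blast
  have vB: "v \<notin> V.span B" using V.span_minimal[OF B(1) sub] v by blast
  have ind: "V.independent (insert v B)" using V.independent_insertI[OF vB B(2)] .
  define f where "f = P.construct (insert v B) (\<lambda>b. if b = v then 1 else 0)"
  have lin: "Vector_Spaces.linear scale (*) f" unfolding f_def by (rule P.linear_construct[OF ind])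
  interpret L: Vector_Spaces.linear scale "(*) :: 'a \<Rightarrow> 'a \<Rightarrow> 'a" f by (rule lin)
  have fv: "f v = 1" unfolding f_def by (subst P.construct_basis[OF ind]) auto
  have fB: "f b = 0" if "b \<in> B" for b
    unfolding f_def using that vB V.span_base[OF that]
    by (subst P.construct_basis[OF ind]) auto
  have fI: "f x = 0" if "x \<in> I" for x
    using L.eq_0_on_span[OF fB] B(3) that by blast
  show ?thesis
    using lin fv fI unfolding Vector_Spaces.linear_iff by auto
qed

lemma vector_space_field: "vector_space ((*) :: 'k::field \<Rightarrow> 'k \<Rightarrow> 'k)"
  by unfold_locales (auto simp: algebra_simps)

lemma linear_functionals_separate:
  fixes scl :: "'k::field \<Rightarrow> 'a::ab_group_add \<Rightarrow> 'a"
  assumes vs: "vector_space scl"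
    and eq: "\<And>\<phi> :: 'a \<Rightarrow> 'k. \<forall>x y. \<phi> (x + y) = \<phi> x + \<phi> y \<Longrightarrow> \<forall>c x. \<phi> (scl c x) = c * \<phi> x
      \<Longrightarrow> \<phi> a = \<phi> b"
  shows "a = b"
proof (rule ccontr)
  assume "a \<noteq> b"
  then have "a - b \<notin> {0}" by simp
  moreover have "module.subspace scl {0}"
    using vs by (simp add: module.subspace_def[OF vs[unfolded module_iff_vector_space[symmetric]]]
        vector_space.scale_eq_0_iff)
  ultimately obtain \<phi> where \<phi>: "\<forall>x y. \<phi> (x + y) = \<phi> x + \<phi> y" "\<forall>c x. \<phi> (scl c x) = c * \<phi> x"
      "\<phi> (a - b) = 1"
    using separating_functional[OF vs] by blast
  have "\<phi> (a - b) + \<phi> b = \<phi> a" using \<phi>(1) by (metis diff_add_cancel)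
  with eq[OF \<phi>(1,2)] \<phi>(3) show False by simp
qed

lemma additive_sum_list:
  assumes "\<And>x y. \<phi> (x + y) = \<phi> x + \<phi> y"
  shows "\<phi> (\<Sum>x\<leftarrow>xs. g x) = (\<Sum>x\<leftarrow>xs. \<phi> (g x :: 'a::ab_group_add) :: 'b::ab_group_add)"
proof -
  have "\<phi> 0 = 0" using assms[of 0 0] by simp
  then show ?thesis by (induction xs) (simp_all add: assms)
qed

lemma sum_list_map_concat: "(\<Sum>x\<leftarrow>concat xss. f x) = (\<Sum>xs\<leftarrow>xss. \<Sum>x\<leftarrow>xs. f x)"
  by (induction xss) auto

lemma sum_list_swap:
  "(\<Sum>x\<leftarrow>xs. \<Sum>y\<leftarrow>ys. (f x y :: 'c::comm_monoid_add)) = (\<Sum>y\<leftarrow>ys. \<Sum>x\<leftarrow>xs. f x y)"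
  by (induction xs) (simp_all add: sum_list_addf)

section \<open>Weak Hopf algebras in Sweedler notation\<close>

locale weak_hopf = vector_space sc
  for sc :: "'k::field \<Rightarrow> 'h::{ring,monoid_mult} \<Rightarrow> 'h" +
  fixes \<Delta> :: "'h \<Rightarrow> ('h \<times> 'h) list"
    and \<epsilon> :: "'h \<Rightarrow> 'k"
    and S :: "'h \<Rightarrow> 'h"
  assumes scale_mult_left: "sc c x * y = sc c (x * y)"
    and scale_mult_right: "x * sc c y = sc c (x * y)"
    and comult_add: "teq2 sc (\<Delta> (x + y)) (\<Delta> x @ \<Delta> y)"
    and comult_scale: "teq2 sc (\<Delta> (sc c x)) (map (\<lambda>(a, b). (sc c a, b)) (\<Delta> x))"
    and counit_add: "\<epsilon> (x + y) = \<epsilon> x + \<epsilon> y"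
    and counit_scale: "\<epsilon> (sc c x) = c * \<epsilon> x"
    and antipode_add: "S (x + y) = S x + S y"
    and antipode_scale: "S (sc c x) = sc c (S x)"
    and comult_coassoc: "teq3 sc (delta2L \<Delta> h) (delta2R \<Delta> h)"
    and counit_left: "(\<Sum>(x, y)\<leftarrow>\<Delta> h. sc (\<epsilon> x) y) = h"
    and counit_right: "(\<Sum>(x, y)\<leftarrow>\<Delta> h. sc (\<epsilon> y) x) = h"
    and comult_mult: "teq2 sc (\<Delta> (k * h)) (tmul2 (\<Delta> k) (\<Delta> h))"
    and counit_mult_left: "(\<Sum>(x, y)\<leftarrow>\<Delta> h. \<epsilon> (k * x) * \<epsilon> (y * g)) = \<epsilon> (k * h * g)"
    and counit_mult_right: "(\<Sum>(x, y)\<leftarrow>\<Delta> h. \<epsilon> (k * y) * \<epsilon> (x * g)) = \<epsilon> (k * h * g)"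
    and comult_unit_left:
      "teq3 sc (tmul3 (map (\<lambda>(a, b). (1, a, b)) (\<Delta> 1)) (map (\<lambda>(a, b). (a, b, 1)) (\<Delta> 1)))
         (delta2L \<Delta> 1)"
    and comult_unit_right:
      "teq3 sc (tmul3 (map (\<lambda>(a, b). (a, b, 1)) (\<Delta> 1)) (map (\<lambda>(a, b). (1, a, b)) (\<Delta> 1)))
         (delta2L \<Delta> 1)"
    and antipode_target: "(\<Sum>(x, y)\<leftarrow>\<Delta> h. x * S y) = (\<Sum>(a, b)\<leftarrow>\<Delta> 1. sc (\<epsilon> (a * h)) b)"
    and antipode_source: "(\<Sum>(x, y)\<leftarrow>\<Delta> h. S x * y) = (\<Sum>(a, b)\<leftarrow>\<Delta> 1. sc (\<epsilon> (h * b)) a)"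
    and antipode_convolution: "S h = (\<Sum>(x, y, z)\<leftarrow>delta2L \<Delta> h. S x * y * S z)"

lemma weak_hopf_algebra_imp_weak_hopf:
  assumes "weak_hopf_algebra sc \<Delta> \<epsilon> S"
  shows "weak_hopf sc \<Delta> \<epsilon> S"
proof -
  note ax = assms[unfolded weak_hopf_algebra_def]
  interpret vector_space sc using ax by blast
  show ?thesis
    by unfold_locales (use ax in \<open>metis\<close>)+
qed

context weak_hopf
begin

definition H_linear :: "('k \<Rightarrow> 'a::ab_group_add \<Rightarrow> 'a) \<Rightarrow> ('h \<Rightarrow> 'a) \<Rightarrow> bool" where
  "H_linear scl g \<longleftrightarrow> (\<forall>x y. g (x + y) = g x + g y) \<and> (\<forall>c x. g (sc c x) = scl c (g x))"

definition H_bilinear :: "('k \<Rightarrow> 'a::ab_group_add \<Rightarrow> 'a) \<Rightarrow> ('h \<Rightarrow> 'h \<Rightarrow> 'a) \<Rightarrow> bool" where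
  "H_bilinear scl \<beta> \<longleftrightarrow> (\<forall>y. H_linear scl (\<lambda>x. \<beta> x y)) \<and> (\<forall>x. H_linear scl (\<beta> x))"

definition H_trilinear :: "('k \<Rightarrow> 'a::ab_group_add \<Rightarrow> 'a) \<Rightarrow> ('h \<Rightarrow> 'h \<Rightarrow> 'h \<Rightarrow> 'a) \<Rightarrow> bool" where
  "H_trilinear scl \<tau> \<longleftrightarrow> (\<forall>y z. H_linear scl (\<lambda>x. \<tau> x y z)) \<and> (\<forall>x z. H_linear scl (\<lambda>y. \<tau> x y z))
     \<and> (\<forall>x y. H_linear scl (\<tau> x y))"

lemmas multilinear_defs = H_linear_def H_bilinear_def H_trilinear_def

definition sweedler :: "('h \<Rightarrow> 'h \<Rightarrow> 'a::comm_monoid_add) \<Rightarrow> 'h \<Rightarrow> 'a" where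
  "sweedler \<beta> h = (\<Sum>(x, y)\<leftarrow>\<Delta> h. \<beta> x y)"

lemma H_bilinearD:
  assumes "H_bilinear scl \<beta>"
  shows "\<beta> (x + x') y = \<beta> x y + \<beta> x' y" "\<beta> x (y + y') = \<beta> x y + \<beta> x y'"
    "\<beta> (sc c x) y = scl c (\<beta> x y)" "\<beta> x (sc c y) = scl c (\<beta> x y)"
  using assms unfolding H_bilinear_def H_linear_def by blast+

lemma H_linearD:
  assumes "H_linear scl g"
  shows "g (x + y) = g x + g y" "g (sc c x) = scl c (g x)"
  using assms unfolding H_linear_def by blast+

text \<open>\<^const>\<open>teq2\<close> and \<^const>\<open>teq3\<close> only speak about scalar-valued forms; separating functionals extend them
  to forms with values in any vector space, in particular in \<open>H\<close> itself.\<close>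

lemma teq2_bilinear:
  fixes scl :: "'k \<Rightarrow> 'a::ab_group_add \<Rightarrow> 'a"
  assumes vs: "vector_space scl" and eq: "teq2 sc t u" and B: "H_bilinear scl B"
  shows "(\<Sum>(x, y)\<leftarrow>t. B x y) = (\<Sum>(x, y)\<leftarrow>u. B x y)"
proof (rule linear_functionals_separate[OF vs])
  fix \<phi> :: "'a \<Rightarrow> 'k"
  assume add: "\<forall>x y. \<phi> (x + y) = \<phi> x + \<phi> y" and scale: "\<forall>c x. \<phi> (scl c x) = c * \<phi> x"
  have "bilinear_form sc (\<lambda>x y. \<phi> (B x y))"
    using B add scale unfolding bilinear_form_def H_bilinear_def H_linear_def by auto
  then have "(\<Sum>(x, y)\<leftarrow>t. \<phi> (B x y)) = (\<Sum>(x, y)\<leftarrow>u. \<phi> (B x y))"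
    using eq unfolding teq2_def by blast
  then show "\<phi> (\<Sum>(x, y)\<leftarrow>t. B x y) = \<phi> (\<Sum>(x, y)\<leftarrow>u. B x y)"
    using add by (simp add: additive_sum_list split_def)
qed

lemma teq3_trilinear:
  fixes scl :: "'k \<Rightarrow> 'a::ab_group_add \<Rightarrow> 'a"
  assumes vs: "vector_space scl" and eq: "teq3 sc t u" and T: "H_trilinear scl \<tau>"
  shows "(\<Sum>(x, y, z)\<leftarrow>t. \<tau> x y z) = (\<Sum>(x, y, z)\<leftarrow>u. \<tau> x y z)"
proof (rule linear_functionals_separate[OF vs])
  fix \<phi> :: "'a \<Rightarrow> 'k"
  assume add: "\<forall>x y. \<phi> (x + y) = \<phi> x + \<phi> y" and scale: "\<forall>c x. \<phi> (scl c x) = c * \<phi> x"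
  have "trilinear_form sc (\<lambda>x y z. \<phi> (\<tau> x y z))"
    using T add scale unfolding trilinear_form_def H_trilinear_def H_linear_def by auto
  then have "(\<Sum>(x, y, z)\<leftarrow>t. \<phi> (\<tau> x y z)) = (\<Sum>(x, y, z)\<leftarrow>u. \<phi> (\<tau> x y z))"
    using eq unfolding teq3_def by blast
  then show "\<phi> (\<Sum>(x, y, z)\<leftarrow>t. \<tau> x y z) = \<phi> (\<Sum>(x, y, z)\<leftarrow>u. \<tau> x y z)"
    using add by (simp add: additive_sum_list split_def)
qed

lemma sweedler_cong: "(\<And>x y. A x y = B x y) \<Longrightarrow> sweedler A h = sweedler B h"
  by (simp add: sweedler_def)

lemma sweedler_add_fun: "sweedler (\<lambda>x y. A x y + B x y) h = sweedler A h + sweedler B h"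
  by (simp add: sweedler_def split_def sum_list_addf)

lemma sweedler_diff_fun:
  "sweedler (\<lambda>x y. (A x y :: 'a::ab_group_add) - B x y) h = sweedler A h - sweedler B h"
  by (simp add: sweedler_def split_def sum_list_subtractf)

lemma sweedler_zero_fun: "sweedler (\<lambda>x y. 0) h = 0"
  by (simp add: sweedler_def split_def)

lemma sweedler_mult_left: "sweedler (\<lambda>x y. (m::'a::semiring_0) * A x y) h = m * sweedler A h"
  by (simp add: sweedler_def split_def sum_list_const_mult)

lemma sweedler_mult_right: "sweedler (\<lambda>x y. A x y * (m::'a::semiring_0)) h = sweedler A h * m"
  by (simp add: sweedler_def split_def sum_list_mult_const)

lemma sweedler_scale:
  assumes "vector_space scl"
  shows "sweedler (\<lambda>x y. scl c (A x y)) h = scl c (sweedler A h)"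
proof -
  interpret VA: vector_space scl by fact
  have "(\<Sum>p\<leftarrow>xs. scl c (g p)) = scl c (\<Sum>p\<leftarrow>xs. g p)" for xs :: "('h \<times> 'h) list" and g
    by (induction xs) (simp_all add: VA.scale_right_distrib)
  then show ?thesis unfolding sweedler_def split_def .
qed

lemma sweedler_additive:
  fixes L :: "'a::ab_group_add \<Rightarrow> 'b::ab_group_add"
  assumes "\<And>x y. L (x + y) = L x + L y"
  shows "L (sweedler A h) = sweedler (\<lambda>x y. L (A x y)) h"
  unfolding sweedler_def using additive_sum_list[of L, OF assms] by (simp add: split_def)

lemma sweedler_swap:
  "sweedler (\<lambda>a b. sweedler (\<lambda>p q. F a b p q) k) h
      = sweedler (\<lambda>p q. sweedler (\<lambda>a b. F a b p q) h) k"
  unfolding sweedler_def split_def by (rule sum_list_swap)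

lemma sweedler_add_arg:
  assumes "vector_space scl" and "H_bilinear scl \<beta>"
  shows "sweedler \<beta> (x + y) = sweedler \<beta> x + sweedler \<beta> y"
  unfolding sweedler_def using teq2_bilinear[OF assms(1) comult_add assms(2)] by simp

lemma sweedler_scale_arg:
  fixes scl :: "'k \<Rightarrow> 'a::ab_group_add \<Rightarrow> 'a"
  assumes vs: "vector_space scl" and B: "H_bilinear scl \<beta>"
  shows "sweedler \<beta> (sc c x) = scl c (sweedler \<beta> x)"
proof -
  have "sweedler \<beta> (sc c x) = (\<Sum>(a, b)\<leftarrow>\<Delta> x. scl c (\<beta> a b))"
    unfolding sweedler_def using teq2_bilinear[OF vs comult_scale B]
    by (simp add: comp_def split_def H_bilinearD(3)[OF B])
  also have "\<dots> = scl c (sweedler \<beta> x)"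
    using sweedler_scale[OF vs] by (simp add: sweedler_def)
  finally show ?thesis .
qed

lemma sweedler_mult_arg:
  assumes "vector_space scl" and "H_bilinear scl \<beta>"
  shows "sweedler \<beta> (k * h) = sweedler (\<lambda>a b. sweedler (\<lambda>c d. \<beta> (a * c) (b * d)) h) k"
  using teq2_bilinear[OF assms(1) comult_mult assms(2)]
  by (simp add: sweedler_def tmul2_def sum_list_map_concat comp_def split_def)

lemma sweedler_coassoc:
  assumes "vector_space scl" and "H_trilinear scl \<tau>"
  shows "sweedler (\<lambda>x y. sweedler (\<lambda>a b. \<tau> a b y) x) h
      = sweedler (\<lambda>x y. sweedler (\<lambda>b c. \<tau> x b c) y) h"
  using teq3_trilinear[OF assms(1) comult_coassoc assms(2)]
  by (simp add: sweedler_def delta2L_def delta2R_def sum_list_map_concat comp_def split_def)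

lemma sweedler_comult_unit_left:
  assumes "vector_space scl" and "H_trilinear scl \<tau>"
  shows "sweedler (\<lambda>a b. sweedler (\<lambda>p q. \<tau> p (a * q) b) 1) 1
    = sweedler (\<lambda>x y. sweedler (\<lambda>p q. \<tau> p q y) x) 1"
  using teq3_trilinear[OF assms(1) comult_unit_left assms(2)]
  by (simp add: sweedler_def tmul3_def delta2L_def sum_list_map_concat comp_def split_def)

lemma sweedler_comult_unit_right:
  assumes "vector_space scl" and "H_trilinear scl \<tau>"
  shows "sweedler (\<lambda>a b. sweedler (\<lambda>p q. \<tau> a (b * p) q) 1) 1
    = sweedler (\<lambda>x y. sweedler (\<lambda>p q. \<tau> p q y) x) 1"
  using teq3_trilinear[OF assms(1) comult_unit_right assms(2)]
  by (simp add: sweedler_def tmul3_def delta2L_def sum_list_map_concat comp_def split_def)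

lemma sweedler_unit_mult:
  assumes "vector_space scl" and "H_bilinear scl \<beta>"
  shows "sweedler (\<lambda>a b. sweedler (\<lambda>c d. \<beta> (a * c) (b * d)) h) 1 = sweedler \<beta> h"
  using sweedler_mult_arg[OF assms, of 1 h] by simp

lemma sweedler_mult_unit:
  assumes "vector_space scl" and "H_bilinear scl \<beta>"
  shows "sweedler (\<lambda>a b. sweedler (\<lambda>c d. \<beta> (a * c) (b * d)) 1) h = sweedler \<beta> h"
  using sweedler_mult_arg[OF assms, of h 1] by simp

lemma sweedler_counit_left:
  assumes "H_linear scl L"
  shows "sweedler (\<lambda>x y. scl (\<epsilon> x) (L y)) h = L h"
proof -
  have "L h = L (\<Sum>(x, y)\<leftarrow>\<Delta> h. sc (\<epsilon> x) y)" by (simp add: counit_left)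
  also have "\<dots> = sweedler (\<lambda>x y. scl (\<epsilon> x) (L y)) h"
    using assms by (simp add: additive_sum_list H_linear_def split_def sweedler_def)
  finally show ?thesis by simp
qed

lemma sweedler_counit_right:
  assumes "H_linear scl L"
  shows "sweedler (\<lambda>x y. scl (\<epsilon> y) (L x)) h = L h"
proof -
  have "L h = L (\<Sum>(x, y)\<leftarrow>\<Delta> h. sc (\<epsilon> y) x)" by (simp add: counit_right)
  also have "\<dots> = sweedler (\<lambda>x y. scl (\<epsilon> y) (L x)) h"
    using assms by (simp add: additive_sum_list H_linear_def split_def sweedler_def)
  finally show ?thesis by simp
qed

lemmas linear_simps = distrib_left distrib_right scale_mult_left scale_mult_right antipode_add
  antipode_scale scale_right_distrib scale_left_distrib scale_scale counit_add counit_scale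
  sweedler_add_fun sweedler_mult_left[where 'a='k] sweedler_mult_right[where 'a='k]
  sweedler_scale[OF vector_space_axioms]
  sweedler_zero_fun

definition H_quadrilinear :: "('h \<Rightarrow> 'h \<Rightarrow> 'h \<Rightarrow> 'h \<Rightarrow> 'k) \<Rightarrow> bool" where
  "H_quadrilinear T \<longleftrightarrow> (\<forall>b c d. H_linear (*) (\<lambda>a. T a b c d))
     \<and> (\<forall>a c d. H_linear (*) (\<lambda>b. T a b c d))
     \<and> (\<forall>a b d. H_linear (*) (\<lambda>c. T a b c d)) \<and> (\<forall>a b c. H_linear (*) (\<lambda>d. T a b c d))"

lemma H_quadrilinearD:
  assumes "H_quadrilinear T"
  shows "T (a + a') b c d = T a b c d + T a' b c d" "T (sc k a) b c d = k * T a b c d"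
    "T a (b + b') c d = T a b c d + T a b' c d" "T a (sc k b) c d = k * T a b c d"
    "T a b (c + c') d = T a b c d + T a b c' d" "T a b (sc k c) d = k * T a b c d"
    "T a b c (d + d') = T a b c d + T a b c d'" "T a b c (sc k d) = k * T a b c d"
  using assms unfolding H_quadrilinear_def H_linear_def by auto

lemma H_quadrilinear_fun:
  assumes "H_quadrilinear T"
  shows "T (a + a') = (\<lambda>b c d. T a b c d + T a' b c d)" "T (sc k a) = (\<lambda>b c d. k * T a b c d)"
    "T (a + a') b = (\<lambda>c d. T a b c d + T a' b c d)" "T (sc k a) b = (\<lambda>c d. k * T a b c d)"
    "T (a + a') b c = (\<lambda>d. T a b c d + T a' b c d)" "T (sc k a) b c = (\<lambda>d. k * T a b c d)"
    "T a (b + b') = (\<lambda>c d. T a b c d + T a b' c d)" "T a (sc k b) = (\<lambda>c d. k * T a b c d)"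
    "T a (b + b') c = (\<lambda>d. T a b c d + T a b' c d)" "T a (sc k b) c = (\<lambda>d. k * T a b c d)"
    "T a b (c + c') = (\<lambda>d. T a b c d + T a b c' d)" "T a b (sc k c) = (\<lambda>d. k * T a b c d)"
  by (simp_all add: fun_eq_iff H_quadrilinearD[OF assms])

lemmas sweedler_linear_arg =
  sweedler_add_arg[OF vector_space_field] sweedler_scale_arg[OF vector_space_field]

lemmas quadrilinear_simps = multilinear_defs linear_simps mult.assoc sweedler_linear_arg

definition sweedler4 :: "('h \<Rightarrow> 'h \<Rightarrow> 'h \<Rightarrow> 'h \<Rightarrow> 'k) \<Rightarrow> 'h \<Rightarrow> 'k" where
  "sweedler4 T h = sweedler (\<lambda>x1 w. sweedler (\<lambda>x2 v. sweedler (\<lambda>x3 x4. T x1 x2 x3 x4) v) w) h"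

lemma sweedler4_balanced:
  assumes "H_quadrilinear T"
  shows "sweedler (\<lambda>x y. sweedler (\<lambda>x1 x2. sweedler (\<lambda>y1 y2. T x1 x2 y1 y2) y) x) h = sweedler4 T h"
  unfolding sweedler4_def
  by (rule sweedler_coassoc[OF vector_space_field])
    (simp add: quadrilinear_simps H_quadrilinearD[OF assms] H_quadrilinear_fun[OF assms])

lemma sweedler4_left_nested:
  assumes Q: "H_quadrilinear T"
  shows "sweedler (\<lambda>x y4. sweedler (\<lambda>x' y3. sweedler (\<lambda>x1 x2. T x1 x2 y3 y4) x') x) h
      = sweedler4 T h"
proof -
  note L = quadrilinear_simps H_quadrilinearD[OF Q] H_quadrilinear_fun[OF Q]
  have "sweedler (\<lambda>x y4. sweedler (\<lambda>x' y3. sweedler (\<lambda>x1 x2. T x1 x2 y3 y4) x') x) h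
      = sweedler (\<lambda>x' w. sweedler (\<lambda>y3 y4. sweedler (\<lambda>x1 x2. T x1 x2 y3 y4) x') w) h"
    by (rule sweedler_coassoc[OF vector_space_field]) (simp add: L)
  also have "\<dots> = sweedler (\<lambda>x' w. sweedler (\<lambda>x1 x2. sweedler (\<lambda>y3 y4. T x1 x2 y3 y4) w) x') h"
    by (rule sweedler_cong, rule sweedler_swap)
  also have "\<dots> = sweedler4 T h"
    unfolding sweedler4_def by (rule sweedler_coassoc[OF vector_space_field]) (simp add: L)
  finally show ?thesis .
qed

lemma sweedler4_middle_nested:
  assumes Q: "H_quadrilinear T"
  shows "sweedler (\<lambda>x y. sweedler (\<lambda>x1 x2. sweedler (\<lambda>c d. T x1 c d y) x2) x) h = sweedler4 T h"
proof -
  have "sweedler (\<lambda>x y. sweedler (\<lambda>x1 x2. sweedler (\<lambda>c d. T x1 c d y) x2) x) h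
      = sweedler (\<lambda>x y. sweedler (\<lambda>u d. sweedler (\<lambda>x1 c. T x1 c d y) u) x) h"
    by (rule sweedler_cong, rule sweedler_coassoc[OF vector_space_field, symmetric])
      (simp add: quadrilinear_simps H_quadrilinearD[OF Q] H_quadrilinear_fun[OF Q])
  also have "\<dots> = sweedler4 T h" by (rule sweedler4_left_nested[OF Q])
  finally show ?thesis .
qed

section \<open>The counital maps and the antipode\<close>

lemma counit_mult_unit_left: "sweedler (\<lambda>x y. \<epsilon> (k * x) * \<epsilon> (y * g)) 1 = \<epsilon> (k * g)"
  using counit_mult_left[where h=1 and k=k and g=g] by (simp add: sweedler_def)
lemma counit_mult_unit_right: "sweedler (\<lambda>x y. \<epsilon> (k * y) * \<epsilon> (x * g)) 1 = \<epsilon> (k * g)"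
  using counit_mult_right[where h=1 and k=k and g=g] by (simp add: sweedler_def)

definition eps_t :: "'h \<Rightarrow> 'h" where "eps_t h = sweedler (\<lambda>a b. sc (\<epsilon> (a * h)) b) 1"
definition eps_s :: "'h \<Rightarrow> 'h" where "eps_s h = sweedler (\<lambda>a b. sc (\<epsilon> (h * b)) a) 1"

lemma comult_antipode_eps_t: "sweedler (\<lambda>x y. x * S y) h = eps_t h"
  using antipode_target[of h] by (simp add: sweedler_def eps_t_def)
lemma comult_antipode_eps_s: "sweedler (\<lambda>x y. S x * y) h = eps_s h"
  using antipode_source[of h] by (simp add: sweedler_def eps_s_def)
lemma antipode_convolution_sweedler: "S h = sweedler (\<lambda>x y. sweedler (\<lambda>a b. S a * b * S y) x) h"
  using antipode_convolution[of h]
  by (simp add: sweedler_def delta2L_def sum_list_map_concat comp_def split_def)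

lemma counit_mult_eps_t: "\<epsilon> (x * eps_t g) = \<epsilon> (x * g)"
proof -
  have "x * eps_t g = sweedler (\<lambda>a b. sc (\<epsilon> (a * g)) (x * b)) 1"
    unfolding eps_t_def
    by (simp add: sweedler_additive[where L="\<lambda>z. x * z"] distrib_left scale_mult_right)
  hence "\<epsilon> (x * eps_t g) = sweedler (\<lambda>a b. \<epsilon> (a * g) * \<epsilon> (x * b)) 1"
    by (simp add: sweedler_additive[where L=\<epsilon>] counit_add counit_scale)
  also have "\<dots> = \<epsilon> (x * g)" using counit_mult_unit_right[of x g] by (simp add: mult.commute)
  finally show ?thesis .
qed

lemma counit_eps_s_mult: "\<epsilon> (eps_s x * g) = \<epsilon> (x * g)"
proof -
  have "eps_s x * g = sweedler (\<lambda>a b. sc (\<epsilon> (x * b)) (a * g)) 1"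
    unfolding eps_s_def
    by (simp add: sweedler_additive[where L="\<lambda>z. z * g"] distrib_right scale_mult_left)
  hence "\<epsilon> (eps_s x * g) = sweedler (\<lambda>a b. \<epsilon> (x * b) * \<epsilon> (a * g)) 1"
    by (simp add: sweedler_additive[where L=\<epsilon>] counit_add counit_scale)
  also have "\<dots> = \<epsilon> (x * g)" by (rule counit_mult_unit_right)
  finally show ?thesis .
qed

lemma eps_t_one: "eps_t 1 = 1"
  unfolding eps_t_def using counit_left[of 1] by (simp add: sweedler_def)
lemma eps_s_one: "eps_s 1 = 1"
  unfolding eps_s_def using counit_right[of 1] by (simp add: sweedler_def)

text \<open>Generic elements \<open>\<phi>(1\<^sub>1) 1\<^sub>2\<close> of the target and \<open>1\<^sub>1 \<phi>(1\<^sub>2)\<close> of the source subalgebra, for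
  linear \<open>\<phi> : H \<rightarrow> k\<close>.\<close>

definition target_elem :: "('h \<Rightarrow> 'k) \<Rightarrow> 'h" where "target_elem \<phi> = sweedler (\<lambda>a b. sc (\<phi> a) b) 1"
definition source_elem :: "('h \<Rightarrow> 'k) \<Rightarrow> 'h" where "source_elem \<phi> = sweedler (\<lambda>a b. sc (\<phi> b) a) 1"

lemma sweedler_linear_combination:
  fixes scl :: "'k \<Rightarrow> 'a::ab_group_add \<Rightarrow> 'a"
  assumes vs: "vector_space scl" and B: "H_bilinear scl \<beta>"
  shows "sweedler \<beta> (sweedler (\<lambda>a b. sc (\<phi> a b) (g a b)) h)
      = sweedler (\<lambda>a b. scl (\<phi> a b) (sweedler \<beta> (g a b))) h"
  by (simp add: sweedler_additive[where L="sweedler \<beta>"] sweedler_add_arg[OF vs B]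
      sweedler_scale_arg[OF vs B])

lemma comult_target_elem_left:
  fixes scl :: "'k \<Rightarrow> 'a::ab_group_add \<Rightarrow> 'a"
  assumes vs: "vector_space scl" and B: "H_bilinear scl \<beta>" and P: "H_linear (*) \<phi>"
  shows "sweedler \<beta> (target_elem \<phi>) = sweedler (\<lambda>p q. \<beta> (p * target_elem \<phi>) q) 1"
proof -
  interpret VA: vector_space scl by (rule vs)
  note R = H_bilinearD[OF B] H_linearD[OF P] VA.scale_right_distrib VA.scale_left_distrib
  define \<tau> where "\<tau> = (\<lambda>x p q. scl (\<phi> x) (\<beta> p q))"
  have tri: "H_trilinear scl \<tau>" unfolding \<tau>_def by (simp add: multilinear_defs linear_simps R)
  have "sweedler \<beta> (target_elem \<phi>) = sweedler (\<lambda>a b. scl (\<phi> a) (sweedler \<beta> b)) 1"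
    unfolding target_elem_def by (rule sweedler_linear_combination[OF vs B])
  also have "\<dots> = sweedler (\<lambda>x y. sweedler (\<lambda>b c. \<tau> x b c) y) 1"
    unfolding \<tau>_def by (simp add: sweedler_scale[OF VA.vector_space_axioms])
  also have "\<dots> = sweedler (\<lambda>x y. sweedler (\<lambda>a b. \<tau> a b y) x) 1"
    by (rule sweedler_coassoc[OF vs tri, symmetric])
  also have "\<dots> = sweedler (\<lambda>a b. sweedler (\<lambda>p q. \<tau> p (a * q) b) 1) 1"
    by (rule sweedler_comult_unit_left[OF vs tri, symmetric])
  also have "\<dots> = sweedler (\<lambda>p q. \<beta> (p * target_elem \<phi>) q) 1"
    unfolding \<tau>_def target_elem_def
    by (simp add: sweedler_additive[where L="\<lambda>z. p * z" for p] distrib_left scale_mult_right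
          sweedler_additive[where L="\<lambda>z. \<beta> z q" for q] R sweedler_scale[OF VA.vector_space_axioms])
  finally show ?thesis .
qed

lemma comult_target_elem_right:
  fixes scl :: "'k \<Rightarrow> 'a::ab_group_add \<Rightarrow> 'a"
  assumes vs: "vector_space scl" and B: "H_bilinear scl \<beta>" and P: "H_linear (*) \<phi>"
  shows "sweedler \<beta> (target_elem \<phi>) = sweedler (\<lambda>p q. \<beta> (target_elem \<phi> * p) q) 1"
proof -
  interpret VA: vector_space scl by (rule vs)
  note R = H_bilinearD[OF B] H_linearD[OF P] VA.scale_right_distrib VA.scale_left_distrib
  define \<tau> where "\<tau> = (\<lambda>x p q. scl (\<phi> x) (\<beta> p q))"
  have tri: "H_trilinear scl \<tau>" unfolding \<tau>_def by (simp add: multilinear_defs linear_simps R)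
  have "sweedler \<beta> (target_elem \<phi>) = sweedler (\<lambda>a b. scl (\<phi> a) (sweedler \<beta> b)) 1"
    unfolding target_elem_def by (rule sweedler_linear_combination[OF vs B])
  also have "\<dots> = sweedler (\<lambda>x y. sweedler (\<lambda>b c. \<tau> x b c) y) 1"
    unfolding \<tau>_def by (simp add: sweedler_scale[OF VA.vector_space_axioms])
  also have "\<dots> = sweedler (\<lambda>x y. sweedler (\<lambda>a b. \<tau> a b y) x) 1"
    by (rule sweedler_coassoc[OF vs tri, symmetric])
  also have "\<dots> = sweedler (\<lambda>a b. sweedler (\<lambda>p q. \<tau> a (b * p) q) 1) 1"
    by (rule sweedler_comult_unit_right[OF vs tri, symmetric])
  also have "\<dots> = sweedler (\<lambda>p q. sweedler (\<lambda>a b. \<tau> a (b * p) q) 1) 1" by (rule sweedler_swap)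
  also have "\<dots> = sweedler (\<lambda>p q. \<beta> (target_elem \<phi> * p) q) 1"
    unfolding \<tau>_def target_elem_def
    by (simp add: sweedler_additive[where L="\<lambda>z. z * p" for p] distrib_right scale_mult_left
          sweedler_additive[where L="\<lambda>z. \<beta> z q" for q] R sweedler_scale[OF VA.vector_space_axioms])
  finally show ?thesis .
qed

lemma comult_source_elem:
  fixes scl :: "'k \<Rightarrow> 'a::ab_group_add \<Rightarrow> 'a"
  assumes vs: "vector_space scl" and B: "H_bilinear scl \<beta>" and P: "H_linear (*) \<phi>"
  shows "sweedler \<beta> (source_elem \<phi>) = sweedler (\<lambda>p q. \<beta> p (source_elem \<phi> * q)) 1"
proof -
  interpret VA: vector_space scl by (rule vs)
  note R = H_bilinearD[OF B] H_linearD[OF P] VA.scale_right_distrib VA.scale_left_distrib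
  define \<tau> where "\<tau> = (\<lambda>p q x. scl (\<phi> x) (\<beta> p q))"
  have tri: "H_trilinear scl \<tau>" unfolding \<tau>_def by (simp add: multilinear_defs linear_simps R)
  have "sweedler \<beta> (source_elem \<phi>) = sweedler (\<lambda>a b. scl (\<phi> b) (sweedler \<beta> a)) 1"
    unfolding source_elem_def by (rule sweedler_linear_combination[OF vs B])
  also have "\<dots> = sweedler (\<lambda>x y. sweedler (\<lambda>a b. \<tau> a b y) x) 1"
    unfolding \<tau>_def by (simp add: sweedler_scale[OF VA.vector_space_axioms])
  also have "\<dots> = sweedler (\<lambda>a b. sweedler (\<lambda>p q. \<tau> p (a * q) b) 1) 1"
    by (rule sweedler_comult_unit_left[OF vs tri, symmetric])
  also have "\<dots> = sweedler (\<lambda>p q. sweedler (\<lambda>a b. \<tau> p (a * q) b) 1) 1" by (rule sweedler_swap)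
  also have "\<dots> = sweedler (\<lambda>p q. \<beta> p (source_elem \<phi> * q)) 1"
    unfolding \<tau>_def source_elem_def
    by (simp add: sweedler_additive[where L="\<lambda>z. z * q" for q] distrib_right scale_mult_left
          sweedler_additive[where L="\<lambda>z. \<beta> p z" for p] R sweedler_scale[OF VA.vector_space_axioms])
  finally show ?thesis .
qed

lemma eps_t_target_elem: "eps_t v = target_elem (\<lambda>a. \<epsilon> (a * v))"
  unfolding eps_t_def target_elem_def ..
lemma eps_s_source_elem: "eps_s x = source_elem (\<lambda>b. \<epsilon> (x * b))"
  unfolding eps_s_def source_elem_def ..
lemma H_linear_counit_mult1: "H_linear (*) (\<lambda>a. \<epsilon> (a * v))"
  by (simp add: multilinear_defs linear_simps)
lemma H_linear_counit_mult2: "H_linear (*) (\<lambda>b. \<epsilon> (x * b))"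
  by (simp add: multilinear_defs linear_simps)

lemma sweedler_eps_t_right:
  fixes scl :: "'k \<Rightarrow> 'a::ab_group_add \<Rightarrow> 'a"
  assumes vs: "vector_space scl" and B: "H_bilinear scl \<beta>"
  shows "sweedler (\<lambda>x y. \<beta> x (eps_t y)) h = sweedler (\<lambda>p q. \<beta> (p * h) q) 1"
proof -
  interpret VA: vector_space scl by (rule vs)
  note R = H_bilinearD[OF B] VA.scale_right_distrib VA.scale_left_distrib
      sweedler_scale[OF VA.vector_space_axioms, symmetric] VA.scale_scale mult_ac
  define G where "G = (\<lambda>x y. sweedler (\<lambda>a b. scl (\<epsilon> (a * y)) (\<beta> x b)) 1)"
  have bG: "H_bilinear scl G" unfolding G_def by (simp add: multilinear_defs linear_simps R)
  define \<tau> where "\<tau> = (\<lambda>X Y Z. sweedler (\<lambda>c d. scl (\<epsilon> (Y * d)) (\<beta> (X * c) Z)) h)"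
  have tri: "H_trilinear scl \<tau>" unfolding \<tau>_def by (simp add: multilinear_defs linear_simps R)
  have "sweedler (\<lambda>x y. \<beta> x (eps_t y)) h = sweedler G h"
    unfolding G_def eps_t_def
    by (simp add: sweedler_additive[where L="\<lambda>z. \<beta> x z" for x] R)
  also have "\<dots> = sweedler (\<lambda>p' q'. sweedler (\<lambda>c d. G (p' * c) (q' * d)) h) 1"
    by (rule sweedler_unit_mult[OF vs bG, symmetric])
  also have "\<dots> = sweedler (\<lambda>p' q'. sweedler (\<lambda>a b. \<tau> p' (a * q') b) 1) 1"
    unfolding G_def \<tau>_def by (rule sweedler_cong, simp only: mult.assoc, rule sweedler_swap)
  also have "\<dots> = sweedler (\<lambda>a b. sweedler (\<lambda>p' q'. \<tau> p' (a * q') b) 1) 1" by (rule sweedler_swap)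
  also have "\<dots> = sweedler (\<lambda>x y. sweedler (\<lambda>X Y. \<tau> X Y y) x) 1"
    by (rule sweedler_comult_unit_left[OF vs tri])
  also have "\<dots> = sweedler (\<lambda>x y. \<beta> (x * h) y) 1"
  proof (rule sweedler_cong)
    fix x y
    define \<gamma> where "\<gamma> = (\<lambda>U W. scl (\<epsilon> W) (\<beta> U y))"
    have bg: "H_bilinear scl \<gamma>" unfolding \<gamma>_def by (simp add: multilinear_defs linear_simps R)
    have "sweedler (\<lambda>X Y. \<tau> X Y y) x = sweedler (\<lambda>X Y. sweedler (\<lambda>c d. \<gamma> (X * c) (Y * d)) h) x"
      unfolding \<tau>_def \<gamma>_def ..
    also have "\<dots> = sweedler \<gamma> (x * h)" by (rule sweedler_mult_arg[OF vs bg, symmetric])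
    also have "\<dots> = \<beta> (x * h) y" unfolding \<gamma>_def
      by (rule sweedler_counit_right) (simp add: multilinear_defs R)
    finally show "sweedler (\<lambda>X Y. \<tau> X Y y) x = \<beta> (x * h) y" .
  qed
  finally show ?thesis .
qed

lemma sweedler_eps_s_left:
  fixes scl :: "'k \<Rightarrow> 'a::ab_group_add \<Rightarrow> 'a"
  assumes vs: "vector_space scl" and B: "H_bilinear scl \<beta>"
  shows "sweedler (\<lambda>x y. \<beta> (eps_s x) y) h = sweedler (\<lambda>p q. \<beta> p (h * q)) 1"
proof -
  interpret VA: vector_space scl by (rule vs)
  note R = H_bilinearD[OF B] VA.scale_right_distrib VA.scale_left_distrib
      sweedler_scale[OF VA.vector_space_axioms, symmetric] VA.scale_scale mult_ac
  define G where "G = (\<lambda>x y. sweedler (\<lambda>a b. scl (\<epsilon> (x * b)) (\<beta> a y)) 1)"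
  have bG: "H_bilinear scl G" unfolding G_def by (simp add: multilinear_defs linear_simps R)
  define \<tau> where "\<tau> = (\<lambda>X Y Z. sweedler (\<lambda>c d. scl (\<epsilon> (c * Y)) (\<beta> X (d * Z))) h)"
  have tri: "H_trilinear scl \<tau>" unfolding \<tau>_def by (simp add: multilinear_defs linear_simps R)
  have "sweedler (\<lambda>x y. \<beta> (eps_s x) y) h = sweedler G h"
    unfolding G_def eps_s_def
    by (simp add: sweedler_additive[where L="\<lambda>z. \<beta> z y" for y] R)
  also have "\<dots> = sweedler (\<lambda>c d. sweedler (\<lambda>p' q'. G (c * p') (d * q')) 1) h"
    by (rule sweedler_mult_unit[OF vs bG, symmetric])
  also have "\<dots> = sweedler (\<lambda>p' q'. sweedler (\<lambda>c d. G (c * p') (d * q')) h) 1"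
    by (rule sweedler_swap)
  also have "\<dots> = sweedler (\<lambda>p' q'. sweedler (\<lambda>a b. \<tau> a (p' * b) q') 1) 1"
    unfolding G_def \<tau>_def by (rule sweedler_cong, simp only: mult.assoc, rule sweedler_swap)
  also have "\<dots> = sweedler (\<lambda>x y. sweedler (\<lambda>X Y. \<tau> X Y y) x) 1"
    by (rule sweedler_comult_unit_left[OF vs tri])
  also have "\<dots> = sweedler (\<lambda>x y. sweedler (\<lambda>b c. \<tau> x b c) y) 1"
    by (rule sweedler_coassoc[OF vs tri])
  also have "\<dots> = sweedler (\<lambda>x y. \<beta> x (h * y)) 1"
  proof (rule sweedler_cong)
    fix x y
    define \<gamma> where "\<gamma> = (\<lambda>U W. scl (\<epsilon> U) (\<beta> x W))"
    have bg: "H_bilinear scl \<gamma>" unfolding \<gamma>_def by (simp add: multilinear_defs linear_simps R)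
    have "sweedler (\<lambda>b c. \<tau> x b c) y = sweedler (\<lambda>c d. sweedler (\<lambda>Y Z. \<gamma> (c * Y) (d * Z)) y) h"
      unfolding \<tau>_def \<gamma>_def by (rule sweedler_swap)
    also have "\<dots> = sweedler \<gamma> (h * y)" by (rule sweedler_mult_arg[OF vs bg, symmetric])
    also have "\<dots> = \<beta> x (h * y)" unfolding \<gamma>_def
      by (rule sweedler_counit_left) (simp add: multilinear_defs R)
    finally show "sweedler (\<lambda>b c. \<tau> x b c) y = \<beta> x (h * y)" .
  qed
  finally show ?thesis .
qed

lemma eps_s_eps_t_commute: "eps_s x * eps_t v = eps_t v * eps_s x"
proof -
  define \<beta> where "\<beta> = (\<lambda>a b. sc (\<epsilon> (x * b)) a)"
  have B: "H_bilinear sc \<beta>" unfolding \<beta>_def by (simp add: multilinear_defs linear_simps)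
  have "sweedler \<beta> (eps_t v) = eps_s x * eps_t v"
    unfolding eps_t_target_elem
    using comult_target_elem_left[OF vector_space_axioms B H_linear_counit_mult1]
    by (simp add: \<beta>_def eps_s_def sweedler_mult_right[symmetric] scale_mult_left)
  moreover have "sweedler \<beta> (eps_t v) = eps_t v * eps_s x"
    unfolding eps_t_target_elem
    using comult_target_elem_right[OF vector_space_axioms B H_linear_counit_mult1]
    by (simp add: \<beta>_def eps_s_def sweedler_mult_left[symmetric] scale_mult_right)
  ultimately show ?thesis by simp
qed

lemma eps_t_mult_eps_t: "eps_t (y * eps_t v) = eps_t (y * v)"
  unfolding eps_t_def[of "y * eps_t v"] eps_t_def[of "y * v"]
  by (rule sweedler_cong) (simp add: mult.assoc[symmetric] counit_mult_eps_t)

lemma eps_s_eps_s_mult: "eps_s (eps_s x * g) = eps_s (x * g)"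
  unfolding eps_s_def[of "eps_s x * g"] eps_s_def[of "x * g"]
  by (rule sweedler_cong) (simp add: mult.assoc counit_eps_s_mult)

lemma eps_t_mult: "eps_t (y * v) = sweedler (\<lambda>a b. a * eps_t v * S b) y"
proof -
  have b1: "H_bilinear sc (\<lambda>a b. a * S b)" by (simp add: multilinear_defs linear_simps)
  have "eps_t (y * v) = eps_t (y * eps_t v)" by (rule eps_t_mult_eps_t[symmetric])
  also have "\<dots> = sweedler (\<lambda>a b. a * S b) (y * eps_t v)" by (simp add: comult_antipode_eps_t)
  also have "\<dots> = sweedler (\<lambda>a b. sweedler (\<lambda>c d. (a * c) * S (b * d)) (eps_t v)) y"
    by (rule sweedler_mult_arg[OF vector_space_axioms b1])
  also have "\<dots> = sweedler (\<lambda>a b. sweedler (\<lambda>p q. (a * p) * eps_t v * S (b * q)) 1) y"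
  proof (rule sweedler_cong)
    fix a b
    have bb: "H_bilinear sc (\<lambda>c d. (a * c) * S (b * d))"
      by (simp add: multilinear_defs linear_simps)
    show "sweedler (\<lambda>c d. (a * c) * S (b * d)) (eps_t v)
        = sweedler (\<lambda>p q. (a * p) * eps_t v * S (b * q)) 1"
      unfolding eps_t_target_elem
      using comult_target_elem_left[OF vector_space_axioms bb H_linear_counit_mult1]
        by (simp add: mult.assoc)
  qed
  also have "\<dots> = sweedler (\<lambda>a b. a * eps_t v * S b) y"
    by (rule sweedler_mult_unit[OF vector_space_axioms, of "\<lambda>X W. X * eps_t v * S W"])
        (simp add: multilinear_defs linear_simps)
  finally show ?thesis .
qed

lemma eps_s_mult: "eps_s (x * g) = sweedler (\<lambda>a b. S a * eps_s x * b) g"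
proof -
  have b1: "H_bilinear sc (\<lambda>a b. S a * b)" by (simp add: multilinear_defs linear_simps)
  have "eps_s (x * g) = eps_s (eps_s x * g)" by (rule eps_s_eps_s_mult[symmetric])
  also have "\<dots> = sweedler (\<lambda>a b. S a * b) (eps_s x * g)" by (simp add: comult_antipode_eps_s)
  also have "\<dots> = sweedler (\<lambda>a b. sweedler (\<lambda>c d. S (a * c) * (b * d)) g) (eps_s x)"
    by (rule sweedler_mult_arg[OF vector_space_axioms b1])
  also have "\<dots> = sweedler (\<lambda>p q. sweedler (\<lambda>c d. S (p * c) * (eps_s x * q * d)) g) 1"
  proof -
    have bb: "H_bilinear sc (\<lambda>a b. sweedler (\<lambda>c d. S (a * c) * (b * d)) g)"
      by (simp add: multilinear_defs linear_simps)
    show ?thesis unfolding eps_s_source_elem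
      using comult_source_elem[OF vector_space_axioms bb H_linear_counit_mult2]
      by (simp add: mult.assoc)
  qed
  also have "\<dots> = sweedler (\<lambda>a b. S a * eps_s x * b) g"
    using sweedler_unit_mult[OF vector_space_axioms, of "\<lambda>X W. S X * eps_s x * W" g]
    by (simp add: multilinear_defs linear_simps mult.assoc)
  finally show ?thesis .
qed

lemma antipode_eps_t: "sweedler (\<lambda>a b. S a * eps_t b) x = S x"
proof -
  have tri: "H_trilinear sc (\<lambda>a b c. S a * b * S c)" by (simp add: multilinear_defs linear_simps)
  have "S x = sweedler (\<lambda>x' y. sweedler (\<lambda>a b. S a * b * S y) x') x"
    by (rule antipode_convolution_sweedler)
  also have "\<dots> = sweedler (\<lambda>a y. sweedler (\<lambda>b c. S a * b * S c) y) x"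
    by (rule sweedler_coassoc[OF vector_space_axioms tri])
  also have "\<dots> = sweedler (\<lambda>a b. S a * eps_t b) x"
    by (simp add: comult_antipode_eps_t[symmetric] sweedler_mult_left[symmetric] mult.assoc)
  finally show ?thesis by simp
qed

lemma eps_s_antipode: "sweedler (\<lambda>a b. eps_s a * S b) x = S x"
proof -
  have "S x = sweedler (\<lambda>x' y. sweedler (\<lambda>a b. S a * b * S y) x') x"
    by (rule antipode_convolution_sweedler)
  also have "\<dots> = sweedler (\<lambda>a b. eps_s a * S b) x"
    by (simp add: comult_antipode_eps_s[symmetric] sweedler_mult_right[symmetric])
  finally show ?thesis by simp
qed

lemma eps_t_add: "eps_t (x + y) = eps_t x + eps_t y"
proof -
  have b: "H_bilinear sc (\<lambda>a b. a * S b)" by (simp add: multilinear_defs linear_simps)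
  show ?thesis using sweedler_add_arg[OF vector_space_axioms b] by (simp add: comult_antipode_eps_t)
qed
lemma eps_t_scale: "eps_t (sc c x) = sc c (eps_t x)"
proof -
  have b: "H_bilinear sc (\<lambda>a b. a * S b)" by (simp add: multilinear_defs linear_simps)
  show ?thesis using sweedler_scale_arg[OF vector_space_axioms b]
    by (simp add: comult_antipode_eps_t)
qed
lemma eps_s_add: "eps_s (x + y) = eps_s x + eps_s y"
proof -
  have b: "H_bilinear sc (\<lambda>a b. S a * b)" by (simp add: multilinear_defs linear_simps)
  show ?thesis using sweedler_add_arg[OF vector_space_axioms b] by (simp add: comult_antipode_eps_s)
qed
lemma eps_s_scale: "eps_s (sc c x) = sc c (eps_s x)"
proof -
  have b: "H_bilinear sc (\<lambda>a b. S a * b)" by (simp add: multilinear_defs linear_simps)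
  show ?thesis using sweedler_scale_arg[OF vector_space_axioms b]
    by (simp add: comult_antipode_eps_s)
qed

lemmas linear_simps_eps = linear_simps eps_t_add eps_t_scale eps_s_add eps_s_scale

lemma antipode_mult_eps_s:
  "S (h * g) = sweedler (\<lambda>x q. sweedler (\<lambda>w e. eps_s (x * w) * (S e * S q)) g) h"
proof -
  have bX: "H_bilinear sc (\<lambda>X Y. S X * eps_t Y)" by (simp add: multilinear_defs linear_simps_eps)
  have "S (h * g) = sweedler (\<lambda>X Y. S X * eps_t Y) (h * g)" by (simp add: antipode_eps_t)
  also have "\<dots> = sweedler (\<lambda>a b. sweedler (\<lambda>c d. S (a * c) * eps_t (b * d)) g) h"
    by (rule sweedler_mult_arg[OF vector_space_axioms bX])
  also have "\<dots>
      = sweedler (\<lambda>a b. sweedler (\<lambda>c d. S (a * c) * sweedler (\<lambda>p q. p * eps_t d * S q) b) g) h"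
    by (simp only: eps_t_mult)
  also have "\<dots>
      = sweedler (\<lambda>a b. sweedler (\<lambda>p q. sweedler (\<lambda>c d. S (a * c) * (p * eps_t d * S q)) g) b) h"
    by (rule sweedler_cong, simp only: sweedler_mult_left[symmetric], rule sweedler_swap)
  also have "\<dots>
      = sweedler (\<lambda>x q. sweedler (\<lambda>a p. sweedler (\<lambda>c d. S (a * c) * (p * eps_t d * S q)) g) x) h"
    by (rule sweedler_coassoc[OF vector_space_axioms, symmetric])
        (simp add: multilinear_defs linear_simps_eps)
  also have "\<dots> = sweedler (\<lambda>x q.
      sweedler (\<lambda>a p. sweedler (\<lambda>w e. sweedler (\<lambda>c d1. S (a * c) * (p * d1) * (S e * S q)) w) g) x)
      h"
  proof (rule sweedler_cong, rule sweedler_cong)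
    fix x q a p
    have "sweedler (\<lambda>c d. S (a * c) * (p * eps_t d * S q)) g
        = sweedler (\<lambda>c d. sweedler (\<lambda>d1 d2. S (a * c) * (p * d1) * (S d2 * S q)) d) g"
      by (simp add: comult_antipode_eps_t[symmetric] sweedler_mult_left[symmetric]
          sweedler_mult_right[symmetric] mult.assoc)
    also have "\<dots> = sweedler (\<lambda>w e. sweedler (\<lambda>c d1. S (a * c) * (p * d1) * (S e * S q)) w) g"
      by (rule sweedler_coassoc[OF vector_space_axioms, symmetric])
          (simp add: multilinear_defs linear_simps_eps)
    finally show "sweedler (\<lambda>c d. S (a * c) * (p * eps_t d * S q)) g
        = sweedler (\<lambda>w e. sweedler (\<lambda>c d1. S (a * c) * (p * d1) * (S e * S q)) w) g" .
  qed
  also have "\<dots> = sweedler (\<lambda>x q.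
      sweedler (\<lambda>w e. sweedler (\<lambda>a p. sweedler (\<lambda>c d1. S (a * c) * (p * d1) * (S e * S q)) w) x) g)
      h"
    by (rule sweedler_cong, rule sweedler_swap)
  also have "\<dots> = sweedler (\<lambda>x q. sweedler (\<lambda>w e. eps_s (x * w) * (S e * S q)) g) h"
  proof (rule sweedler_cong, rule sweedler_cong)
    fix x q w e
    have bb: "H_bilinear sc (\<lambda>X Y. S X * Y)" by (simp add: multilinear_defs linear_simps_eps)
    show "sweedler (\<lambda>a p. sweedler (\<lambda>c d1. S (a * c) * (p * d1) * (S e * S q)) w) x
        = eps_s (x * w) * (S e * S q)"
      by (simp add: sweedler_mult_right sweedler_mult_arg[OF vector_space_axioms bb, symmetric]
          comult_antipode_eps_s)
  qed
  finally show ?thesis .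
qed

lemma antipode_mult: "S (h * g) = S g * S h"
proof -
  have "sweedler (\<lambda>w e. eps_s (x * w) * (S e * S q)) g
      = sweedler (\<lambda>a v. S a * eps_t v * eps_s x * S q) g"
    for x q
  proof -
    have "sweedler (\<lambda>w e. eps_s (x * w) * (S e * S q)) g
        = sweedler (\<lambda>w e. sweedler (\<lambda>a b. S a * eps_s x * b * (S e * S q)) w) g"
      by (simp add: eps_s_mult sweedler_mult_right)
    also have "\<dots> = sweedler (\<lambda>a v. sweedler (\<lambda>b e. S a * eps_s x * b * (S e * S q)) v) g"
      by (rule sweedler_coassoc[OF vector_space_axioms])
          (simp add: multilinear_defs linear_simps_eps)
    also have "\<dots> = sweedler (\<lambda>a v. S a * eps_s x * eps_t v * S q) g"
      by (simp add: comult_antipode_eps_t[symmetric] sweedler_mult_left[symmetric]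
          sweedler_mult_right[symmetric] mult.assoc)
    finally show ?thesis by (simp add: mult.assoc eps_s_eps_t_commute)
  qed
  then have "S (h * g) = sweedler (\<lambda>x q. sweedler (\<lambda>a v. S a * eps_t v * eps_s x * S q) g) h"
    by (simp add: antipode_mult_eps_s)
  also have "\<dots> = sweedler (\<lambda>x q. S g * (eps_s x * S q)) h"
    by (rule sweedler_cong) (simp add: mult.assoc[symmetric] sweedler_mult_right antipode_eps_t)
  also have "\<dots> = S g * S h" by (simp add: sweedler_mult_left eps_s_antipode)
  finally show ?thesis .
qed

lemma antipode_sweedler: "S (sweedler A h) = sweedler (\<lambda>x y. S (A x y)) h"
  by (rule sweedler_additive) (simp add: antipode_add)

lemma antipode_target_elem:
  assumes P: "H_linear (*) \<phi>"
  shows "S (target_elem \<phi>) = eps_s (target_elem \<phi>)"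
proof -
  have b: "H_bilinear sc (\<lambda>a b. S a * b)" by (simp add: multilinear_defs linear_simps)
  have "eps_s (target_elem \<phi>) = sweedler (\<lambda>a b. S a * b) (target_elem \<phi>)"
    by (simp add: comult_antipode_eps_s)
  also have "\<dots> = sweedler (\<lambda>p q. S (p * target_elem \<phi>) * q) 1"
    by (rule comult_target_elem_left[OF vector_space_axioms b P])
  also have "\<dots> = S (target_elem \<phi>) * eps_s 1"
    by (simp add: antipode_mult mult.assoc sweedler_mult_left comult_antipode_eps_s)
  finally show ?thesis by (simp add: eps_s_one)
qed

lemma antipode_source_elem:
  assumes P: "H_linear (*) \<phi>"
  shows "S (source_elem \<phi>) = eps_t (source_elem \<phi>)"
proof -
  have b: "H_bilinear sc (\<lambda>a b. a * S b)" by (simp add: multilinear_defs linear_simps)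
  have "eps_t (source_elem \<phi>) = sweedler (\<lambda>a b. a * S b) (source_elem \<phi>)"
    by (simp add: comult_antipode_eps_t)
  also have "\<dots> = sweedler (\<lambda>p q. p * S (source_elem \<phi> * q)) 1"
    by (rule comult_source_elem[OF vector_space_axioms b P])
  also have "\<dots> = eps_t 1 * S (source_elem \<phi>)"
    by (simp add: antipode_mult mult.assoc[symmetric] sweedler_mult_right comult_antipode_eps_t)
  finally show ?thesis by (simp add: eps_t_one)
qed

lemma eps_s_conv: "eps_s h = sweedler (\<lambda>a b. sc (\<epsilon> (h * a)) (S b)) 1"
proof -
  have P: "H_linear (*) (\<lambda>a. \<epsilon> (h * a))" by (simp add: multilinear_defs linear_simps)
  have "sweedler (\<lambda>a b. sc (\<epsilon> (h * a)) (S b)) 1 = S (target_elem (\<lambda>a. \<epsilon> (h * a)))"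
    unfolding target_elem_def by (simp add: antipode_sweedler antipode_scale)
  also have "\<dots> = eps_s (target_elem (\<lambda>a. \<epsilon> (h * a)))" by (rule antipode_target_elem[OF P])
  also have "\<dots> = eps_s h"
    unfolding eps_s_def[of "target_elem _"] eps_s_def[of h]
  proof (rule sweedler_cong)
    fix a b
    have "\<epsilon> (target_elem (\<lambda>a. \<epsilon> (h * a)) * b) = sweedler (\<lambda>p q. \<epsilon> (h * p) * \<epsilon> (q * b)) 1"
      unfolding target_elem_def
      by (simp add: sweedler_additive[where L="\<lambda>z. z * b"] distrib_right
          sweedler_additive[where L=\<epsilon>] counit_add
          scale_mult_left counit_scale)
    also have "\<dots> = \<epsilon> (h * b)" by (rule counit_mult_unit_left)
    finally show "sc (\<epsilon> (target_elem (\<lambda>a. \<epsilon> (h * a)) * b)) a = sc (\<epsilon> (h * b)) a" by simp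
  qed
  finally show ?thesis by simp
qed

lemma eps_t_conv: "eps_t h = sweedler (\<lambda>a b. sc (\<epsilon> (b * h)) (S a)) 1"
proof -
  have P: "H_linear (*) (\<lambda>b. \<epsilon> (b * h))" by (simp add: multilinear_defs linear_simps)
  have "sweedler (\<lambda>a b. sc (\<epsilon> (b * h)) (S a)) 1 = S (source_elem (\<lambda>b. \<epsilon> (b * h)))"
    unfolding source_elem_def by (simp add: antipode_sweedler antipode_scale)
  also have "\<dots> = eps_t (source_elem (\<lambda>b. \<epsilon> (b * h)))" by (rule antipode_source_elem[OF P])
  also have "\<dots> = eps_t h"
    unfolding eps_t_def[of "source_elem _"] eps_t_def[of h]
  proof (rule sweedler_cong)
    fix a b
    have "\<epsilon> (a * source_elem (\<lambda>b. \<epsilon> (b * h))) = sweedler (\<lambda>p q. \<epsilon> (a * p) * \<epsilon> (q * h)) 1"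
      unfolding source_elem_def
      by (simp add: sweedler_additive[where L="\<lambda>z. a * z"] distrib_left
          sweedler_additive[where L=\<epsilon>] counit_add
          scale_mult_right counit_scale mult.commute)
    also have "\<dots> = \<epsilon> (a * h)" by (rule counit_mult_unit_left)
    finally show "sc (\<epsilon> (a * source_elem (\<lambda>b. \<epsilon> (b * h)))) b = sc (\<epsilon> (a * h)) b" by simp
  qed
  finally show ?thesis by simp
qed

lemma sweedler_eps_s_right:
  fixes scl :: "'k \<Rightarrow> 'a::ab_group_add \<Rightarrow> 'a"
  assumes vs: "vector_space scl" and B: "H_bilinear scl \<beta>"
  shows "sweedler (\<lambda>x y. sweedler (\<lambda>a b. \<beta> x (S a * b)) y) h = sweedler (\<lambda>p q. \<beta> (h * p) (S q)) 1"
proof -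
  interpret VA: vector_space scl by (rule vs)
  note R = H_bilinearD[OF B] VA.scale_right_distrib VA.scale_left_distrib
      sweedler_scale[OF VA.vector_space_axioms, symmetric] VA.scale_scale mult_ac
  define G where "G = (\<lambda>x y. sweedler (\<lambda>p q. scl (\<epsilon> (y * p)) (\<beta> x (S q))) 1)"
  have bG: "H_bilinear scl G" unfolding G_def by (simp add: multilinear_defs linear_simps R)
  define \<tau> where "\<tau> = (\<lambda>A B C. sweedler (\<lambda>x y. scl (\<epsilon> (y * B)) (\<beta> (x * A) (S C))) h)"
  have tri: "H_trilinear scl \<tau>" unfolding \<tau>_def by (simp add: multilinear_defs linear_simps R)
  have "sweedler (\<lambda>x y. sweedler (\<lambda>a b. \<beta> x (S a * b)) y) h = sweedler (\<lambda>x y. \<beta> x (eps_s y)) h"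
    by (simp add: comult_antipode_eps_s[symmetric] sweedler_additive[where L="\<beta> x" for x] R)
  also have "\<dots> = sweedler G h"
    unfolding G_def eps_s_conv by (simp add: sweedler_additive[where L="\<beta> x" for x] R)
  also have "\<dots> = sweedler (\<lambda>x y. sweedler (\<lambda>p' q'. G (x * p') (y * q')) 1) h"
    by (rule sweedler_mult_unit[OF vs bG, symmetric])
  also have "\<dots> = sweedler (\<lambda>p' q'. sweedler (\<lambda>x y. G (x * p') (y * q')) h) 1"
    by (rule sweedler_swap)
  also have "\<dots> = sweedler (\<lambda>p' q'. sweedler (\<lambda>p q. \<tau> p' (q' * p) q) 1) 1"
    unfolding G_def \<tau>_def by (rule sweedler_cong, simp only: mult.assoc, rule sweedler_swap)
  also have "\<dots> = sweedler (\<lambda>w e. sweedler (\<lambda>A B. \<tau> A B e) w) 1"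
    by (rule sweedler_comult_unit_right[OF vs tri])
  also have "\<dots> = sweedler (\<lambda>w e. \<beta> (h * w) (S e)) 1"
  proof (rule sweedler_cong)
    fix w e
    define \<gamma> where "\<gamma> = (\<lambda>U W. scl (\<epsilon> W) (\<beta> U (S e)))"
    have bg: "H_bilinear scl \<gamma>" unfolding \<gamma>_def by (simp add: multilinear_defs linear_simps R)
    have "sweedler (\<lambda>A B. \<tau> A B e) w = sweedler (\<lambda>x y. sweedler (\<lambda>A B. \<gamma> (x * A) (y * B)) w) h"
      unfolding \<tau>_def \<gamma>_def by (rule sweedler_swap)
    also have "\<dots> = sweedler \<gamma> (h * w)" by (rule sweedler_mult_arg[OF vs bg, symmetric])
    also have "\<dots> = \<beta> (h * w) (S e)" unfolding \<gamma>_def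
      by (rule sweedler_counit_right) (simp add: multilinear_defs R)
    finally show "sweedler (\<lambda>A B. \<tau> A B e) w = \<beta> (h * w) (S e)" .
  qed
  finally show ?thesis .
qed

lemma sweedler_eps_t_left:
  fixes scl :: "'k \<Rightarrow> 'a::ab_group_add \<Rightarrow> 'a"
  assumes vs: "vector_space scl" and B: "H_bilinear scl \<beta>"
  shows "sweedler (\<lambda>x y. sweedler (\<lambda>a b. \<beta> (a * S b) y) x) h = sweedler (\<lambda>p q. \<beta> (S p) (q * h)) 1"
proof -
  interpret VA: vector_space scl by (rule vs)
  note R = H_bilinearD[OF B] VA.scale_right_distrib VA.scale_left_distrib
      sweedler_scale[OF VA.vector_space_axioms, symmetric] VA.scale_scale mult_ac
  define G where "G = (\<lambda>x y. sweedler (\<lambda>p q. scl (\<epsilon> (q * x)) (\<beta> (S p) y)) 1)"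
  have bG: "H_bilinear scl G" unfolding G_def by (simp add: multilinear_defs linear_simps R)
  define \<tau> where "\<tau> = (\<lambda>A B C. sweedler (\<lambda>x y. scl (\<epsilon> (B * x)) (\<beta> (S A) (C * y))) h)"
  have tri: "H_trilinear scl \<tau>" unfolding \<tau>_def by (simp add: multilinear_defs linear_simps R)
  have "sweedler (\<lambda>x y. sweedler (\<lambda>a b. \<beta> (a * S b) y) x) h = sweedler (\<lambda>x y. \<beta> (eps_t x) y) h"
    by (simp add: comult_antipode_eps_t[symmetric] sweedler_additive[where L="\<lambda>z. \<beta> z y" for y] R)
  also have "\<dots> = sweedler G h"
    unfolding G_def eps_t_conv by (simp add: sweedler_additive[where L="\<lambda>z. \<beta> z y" for y] R)
  also have "\<dots> = sweedler (\<lambda>p' q'. sweedler (\<lambda>x y. G (p' * x) (q' * y)) h) 1"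
    by (rule sweedler_unit_mult[OF vs bG, symmetric])
  also have "\<dots> = sweedler (\<lambda>p q. sweedler (\<lambda>p' q'. \<tau> p (q * p') q') 1) 1"
  proof -
    have "sweedler (\<lambda>p' q'. sweedler (\<lambda>x y. G (p' * x) (q' * y)) h) 1
        = sweedler (\<lambda>p' q'.
            sweedler (\<lambda>p q. sweedler (\<lambda>x y. scl (\<epsilon> (q * p' * x)) (\<beta> (S p) (q' * y))) h) 1) 1"
      unfolding G_def by (rule sweedler_cong, simp only: mult.assoc, rule sweedler_swap)
    also have "\<dots> = sweedler (\<lambda>p q.
        sweedler (\<lambda>p' q'. sweedler (\<lambda>x y. scl (\<epsilon> (q * p' * x)) (\<beta> (S p) (q' * y))) h) 1) 1"
      by (rule sweedler_swap)
    finally show ?thesis unfolding \<tau>_def by (simp only: mult.assoc)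
  qed
  also have "\<dots> = sweedler (\<lambda>w e. sweedler (\<lambda>A B. \<tau> A B e) w) 1"
    by (rule sweedler_comult_unit_right[OF vs tri])
  also have "\<dots> = sweedler (\<lambda>A v. sweedler (\<lambda>B C. \<tau> A B C) v) 1"
    by (rule sweedler_coassoc[OF vs tri])
  also have "\<dots> = sweedler (\<lambda>A v. \<beta> (S A) (v * h)) 1"
  proof (rule sweedler_cong)
    fix A v
    define \<gamma> where "\<gamma> = (\<lambda>U W. scl (\<epsilon> U) (\<beta> (S A) W))"
    have bg: "H_bilinear scl \<gamma>" unfolding \<gamma>_def by (simp add: multilinear_defs linear_simps R)
    have "sweedler (\<lambda>B C. \<tau> A B C) v = sweedler (\<lambda>B C. sweedler (\<lambda>x y. \<gamma> (B * x) (C * y)) h) v"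
      unfolding \<tau>_def \<gamma>_def ..
    also have "\<dots> = sweedler \<gamma> (v * h)" by (rule sweedler_mult_arg[OF vs bg, symmetric])
    also have "\<dots> = \<beta> (S A) (v * h)" unfolding \<gamma>_def
      by (rule sweedler_counit_left) (simp add: multilinear_defs R)
    finally show "sweedler (\<lambda>B C. \<tau> A B C) v = \<beta> (S A) (v * h)" .
  qed
  finally show ?thesis .
qed

end

section \<open>The free algebra\<close>

text \<open>The ring structure of \<^typ>\<open>'a list \<Rightarrow>\<^sub>0 'b\<close> comes from a monoid structure on the words;
  concatenation makes it the free algebra, with \<^const>\<open>fmul\<close> as its product.\<close>

instantiation list :: (type) monoid_add
begin
definition zero_list_def: "0 = []"
definition plus_list_def: "(xs::'a list) + ys = xs @ ys"
instance by standard (auto simp: zero_list_def plus_list_def)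
end

lemma poly_mapping_sum_single:
  "(p :: 'a \<Rightarrow>\<^sub>0 'b::comm_monoid_add) =
     (\<Sum>u\<in>Poly_Mapping.keys p. Poly_Mapping.single u (Poly_Mapping.lookup p u))"
proof (rule poly_mapping_eqI)
  fix k
  have "(\<Sum>u\<in>Poly_Mapping.keys p. (Poly_Mapping.lookup p u when u = k)) = Poly_Mapping.lookup p k"
  proof (cases "k \<in> Poly_Mapping.keys p")
    case True
    then show ?thesis by (simp add: sum.delta' when_def)
  next
    case False
    then show ?thesis by (auto simp: when_def in_keys_iff intro: sum.neutral)
  qed
  then show "Poly_Mapping.lookup p k =
      Poly_Mapping.lookup (\<Sum>u\<in>Poly_Mapping.keys p. Poly_Mapping.single u (Poly_Mapping.lookup p u))
          k"
    by (simp add: lookup_sum lookup_single)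
qed

lemma single_Nil_one: "Poly_Mapping.single [] (1::'b::semiring_1) = 1"
  using single_one by (simp add: zero_list_def[symmetric])

lemma fmul_eq_times: "fmul p q = p * q"
proof -
  have "p * q = (\<Sum>u\<in>Poly_Mapping.keys p. Poly_Mapping.single u (Poly_Mapping.lookup p u)) *
                (\<Sum>v\<in>Poly_Mapping.keys q. Poly_Mapping.single v (Poly_Mapping.lookup q v))"
    using poly_mapping_sum_single[of p] poly_mapping_sum_single[of q] by simp
  also have "\<dots> = fmul p q"
    unfolding fmul_def
    by (simp add: sum_distrib_left sum_distrib_right mult_single plus_list_def
        sum.swap[of _ "Poly_Mapping.keys q"])
  finally show ?thesis by simp
qed

lemma fsc_eq_times: "fsc c p = Poly_Mapping.single [] c * p"
  unfolding fsc_def using mult_map_scale_conv_mult[of c p] by (simp add: zero_list_def)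

lemma funit_eq_one: "funit = 1"
  unfolding funit_def by (rule single_Nil_one)

lemma single_Nil_commute:
  "Poly_Mapping.single [] (c::'k::field) * p = p * Poly_Mapping.single [] c"
proof -
  have "Poly_Mapping.single [] c * Poly_Mapping.single u a
      = Poly_Mapping.single u a * Poly_Mapping.single [] c"
    for u a
    by (simp add: mult_single plus_list_def mult.commute)
  then have "Poly_Mapping.single [] c *
      (\<Sum>u\<in>Poly_Mapping.keys p. Poly_Mapping.single u (Poly_Mapping.lookup p u))
      = (\<Sum>u\<in>Poly_Mapping.keys p. Poly_Mapping.single u (Poly_Mapping.lookup p u)) *
          Poly_Mapping.single [] c"
    unfolding sum_distrib_left sum_distrib_right by (intro sum.cong refl) blast
  then show ?thesis using poly_mapping_sum_single[of p] by simp
qed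

lemma fsc_mult_left: "fsc c p * q = fsc c (p * q)"
  by (simp add: fsc_eq_times mult.assoc)

lemma fsc_mult_right: "p * fsc c q = fsc c (p * q)"
  using single_Nil_commute[of c p] by (simp add: fsc_eq_times mult.assoc[symmetric])

lemma fsc_add: "fsc c (p + q) = fsc c p + fsc c q"
  by (simp add: fsc_eq_times distrib_left)

lemma vector_space_fsc: "vector_space (fsc :: 'k::field \<Rightarrow> ('h, 'k) free_alg \<Rightarrow> ('h, 'k) free_alg)"
  by unfold_locales
    (simp_all add: fsc_eq_times distrib_left distrib_right single_add mult.assoc[symmetric]
      mult_single plus_list_def single_Nil_one)

lemma fideal_sum: "finite X \<Longrightarrow> (\<And>x. x \<in> X \<Longrightarrow> g x \<in> fideal R) \<Longrightarrow> (\<Sum>x\<in>X. g x) \<in> fideal R"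
  by (induction X rule: finite_induct) (auto intro: fideal.zero fideal.add)

lemma fideal_mult_single:
  assumes "p \<in> fideal R"
  shows "Poly_Mapping.single u c * p * Poly_Mapping.single v d \<in> fideal R"
  using assms
proof (induction p rule: fideal.induct)
  case zero
  then show ?case by (simp add: fideal.zero)
next
  case (gen r u' c' v')
  have split: "Poly_Mapping.single v' 1 * Poly_Mapping.single v d
      = Poly_Mapping.single [] d * Poly_Mapping.single (v' @ v) (1::'b)"
    by (simp add: mult_single plus_list_def)
  have "Poly_Mapping.single u c * (Poly_Mapping.single u' c' * r * Poly_Mapping.single v' 1)
        * Poly_Mapping.single v d
      = Poly_Mapping.single u c * Poly_Mapping.single u' c' * (r * Poly_Mapping.single [] d)
        * Poly_Mapping.single (v' @ v) 1"
    by (simp only: mult.assoc split)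
  also have "\<dots> = Poly_Mapping.single u c * Poly_Mapping.single u' c' * Poly_Mapping.single [] d * r
        * Poly_Mapping.single (v' @ v) 1"
    using single_Nil_commute[of d r] by (metis mult.assoc)
  also have "\<dots> = Poly_Mapping.single (u @ u') (c * c' * d) * r * Poly_Mapping.single (v' @ v) 1"
    by (simp add: mult_single plus_list_def)
  finally show ?case
    using fideal.gen[OF gen] by (simp add: fmul_eq_times)
next
  case (add p q)
  then show ?case by (simp add: distrib_left distrib_right fideal.add)
qed

lemma fideal_mult:
  assumes "p \<in> fideal R"
  shows "P * p * Q \<in> fideal R"
proof -
  have "P * p * Q = (\<Sum>u\<in>Poly_Mapping.keys P. Poly_Mapping.single u (Poly_Mapping.lookup P u)) * p *
      (\<Sum>v\<in>Poly_Mapping.keys Q. Poly_Mapping.single v (Poly_Mapping.lookup Q v))"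
    using poly_mapping_sum_single[of P] poly_mapping_sum_single[of Q] by simp
  also have "\<dots> = (\<Sum>u\<in>Poly_Mapping.keys P. \<Sum>v\<in>Poly_Mapping.keys Q.
      Poly_Mapping.single u (Poly_Mapping.lookup P u) * p * Poly_Mapping.single v
          (Poly_Mapping.lookup Q v))"
    by (simp add: sum_distrib_left sum_distrib_right sum.swap[of _ "Poly_Mapping.keys Q"])
  also have "\<dots> \<in> fideal R"
    by (intro fideal_sum fideal_mult_single assms) auto
  finally show ?thesis .
qed

lemma fideal_mult_left: "p \<in> fideal R \<Longrightarrow> A * p \<in> fideal R"
  using fideal_mult[of p R A 1] by simp

lemma fideal_mult_right: "p \<in> fideal R \<Longrightarrow> p * B \<in> fideal R"
  using fideal_mult[of p R 1 B] by simp

lemma fideal_fsc: "p \<in> fideal R \<Longrightarrow> fsc c p \<in> fideal R"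
  by (simp add: fsc_eq_times fideal_mult_left)

section \<open>Admissible functionals on the free algebra\<close>

context weak_hopf
begin

abbreviation par_ideal :: "('h, 'k) free_alg set" where
  "par_ideal \<equiv> fideal (par_rels sc \<Delta> S)"

definition admissible :: "(('h, 'k) free_alg \<Rightarrow> 'k) \<Rightarrow> bool" where
  "admissible f \<longleftrightarrow> (\<forall>p q. f (p + q) = f p + f q) \<and> (\<forall>c p. f (fsc c p) = c * f p)
     \<and> (\<forall>r\<in>par_ideal. f r = 0)"

lemma admissible_add: "admissible f \<Longrightarrow> f (p + q) = f p + f q"
  unfolding admissible_def by blast

lemma admissible_fsc: "admissible f \<Longrightarrow> f (fsc c p) = c * f p"
  unfolding admissible_def by blast

lemma admissible_ideal: "admissible f \<Longrightarrow> r \<in> par_ideal \<Longrightarrow> f r = 0"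
  unfolding admissible_def by blast

lemma admissible_diff: "admissible f \<Longrightarrow> f (p - q) = f p - f q"
  using admissible_add[of f "p - q" q] by simp

lemma admissible_sweedler: "admissible f \<Longrightarrow> f (sweedler A h) = sweedler (\<lambda>x y. f (A x y)) h"
  by (rule sweedler_additive) (simp add: admissible_add)

lemma admissible_context:
  assumes "admissible f"
  shows "admissible (\<lambda>p. f (P * p * Q))"
  unfolding admissible_def
  by (simp add: distrib_left distrib_right fsc_mult_left fsc_mult_right fideal_mult
      admissible_add[OF assms] admissible_fsc[OF assms] admissible_ideal[OF assms])

lemma admissible_context_left: "admissible f \<Longrightarrow> admissible (\<lambda>p. f (P * p))"
  using admissible_context[of f P 1] by simp

lemma admissible_context_right: "admissible f \<Longrightarrow> admissible (\<lambda>p. f (p * Q))"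
  using admissible_context[of f 1 Q] by simp

lemma subspace_par_ideal: "module.subspace fsc par_ideal"
proof -
  interpret VF: vector_space "fsc :: 'k \<Rightarrow> ('h, 'k) free_alg \<Rightarrow> ('h, 'k) free_alg"
    by (rule vector_space_fsc)
  show ?thesis
    unfolding VF.subspace_def by (auto intro: fideal.zero fideal.add fideal_fsc)
qed

lemma par_eq_iff_admissible: "par_eq sc \<Delta> S p q \<longleftrightarrow> (\<forall>f. admissible f \<longrightarrow> f p = f q)"
proof
  assume "par_eq sc \<Delta> S p q"
  then show "\<forall>f. admissible f \<longrightarrow> f p = f q"
    unfolding par_eq_def using admissible_ideal admissible_diff by fastforce
next
  assume eq: "\<forall>f. admissible f \<longrightarrow> f p = f q"
  show "par_eq sc \<Delta> S p q"
  proof (rule ccontr)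
    assume "\<not> par_eq sc \<Delta> S p q"
    then have "p - q \<notin> par_ideal" unfolding par_eq_def .
    then obtain f where f: "\<forall>x y. f (x + y) = f x + f y" "\<forall>c x. f (fsc c x) = c * f x"
        "\<forall>x\<in>par_ideal. f x = 0" "f (p - q) = 1"
      using separating_functional[OF vector_space_fsc subspace_par_ideal] by blast
    then have "admissible f" unfolding admissible_def by blast
    with eq f(4) show False by (auto simp: admissible_diff)
  qed
qed

lemma par_eqI: "(\<And>f. admissible f \<Longrightarrow> f p = f q) \<Longrightarrow> par_eq sc \<Delta> S p q"
  by (simp add: par_eq_iff_admissible)

lemma par_eqD: "par_eq sc \<Delta> S p q \<Longrightarrow> admissible f \<Longrightarrow> f (P * p * Q) = f (P * q * Q)"
  using par_eq_iff_admissible admissible_context by blast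

lemma par_rels_in_ideal: "r \<in> par_rels sc \<Delta> S \<Longrightarrow> r \<in> par_ideal"
  using fideal.gen[of r "par_rels sc \<Delta> S" "[]" 1 "[]"] by (simp add: fmul_eq_times single_Nil_one)

lemma admissible_par_rel: "admissible f \<Longrightarrow> r \<in> par_rels sc \<Delta> S \<Longrightarrow> f r = 0"
  by (simp add: admissible_ideal par_rels_in_ideal)

lemma admissible_gen_one: "admissible f \<Longrightarrow> f (gen 1) = f 1"
  using admissible_par_rel[of f "gen 1 - funit"]
  by (simp add: par_rels_def admissible_diff funit_eq_one)

text \<open>Inside an admissible functional \<^const>\<open>gen\<close> is linear at every position of a product. To let the
  simplifier see this, \<open>gen (x + y)\<close> and \<open>gen (sc c x)\<close> are split off a defect lying in the ideal,
  and the simplifier then proves ideal membership of the products containing a defect.\<close>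

definition add_defect :: "'h \<Rightarrow> 'h \<Rightarrow> ('h, 'k) free_alg" where
  "add_defect x y = gen (x + y) - gen x - gen y"

definition scale_defect :: "'k \<Rightarrow> 'h \<Rightarrow> ('h, 'k) free_alg" where
  "scale_defect c x = gen (sc c x) - fsc c (gen x)"

lemma gen_add_expand: "gen (x + y) = gen x + gen y + add_defect x y"
  by (simp add: add_defect_def)

lemma gen_scale_expand: "gen (sc c x) = fsc c (gen x) + scale_defect c x"
  by (simp add: scale_defect_def)

lemma add_defect_in_ideal: "add_defect x y \<in> par_ideal"
  unfolding add_defect_def by (rule par_rels_in_ideal) (auto simp: par_rels_def)

lemma scale_defect_in_ideal: "scale_defect c x \<in> par_ideal"
  unfolding scale_defect_def by (rule par_rels_in_ideal) (auto simp: par_rels_def)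

lemmas gen_linear_simps = gen_add_expand gen_scale_expand add_defect_in_ideal scale_defect_in_ideal
  fideal_mult_left fideal_mult_right fideal_fsc fsc_mult_left fsc_mult_right fsc_add

lemmas admissible_linear_simps = admissible_add admissible_fsc admissible_ideal admissible_sweedler

lemmas times_sweedler_free =
  sweedler_mult_left[where 'a="('h, 'k) free_alg", symmetric]
  sweedler_mult_right[where 'a="('h, 'k) free_alg", symmetric]

lemmas free_linear_simps = quadrilinear_simps gen_linear_simps times_sweedler_free

lemma admissible_merge_left:
  assumes "admissible f"
  shows "sweedler (\<lambda>x y. f (gen h * gen x * gen (S y))) k
      = sweedler (\<lambda>x y. f (gen (h * x) * gen (S y))) k"
proof -
  have "f (\<Sum>(x, y)\<leftarrow>\<Delta> k. fmul (fmul (gen h) (gen x)) (gen (S y)) - fmul (gen (h * x)) (gen (S y)))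
      = 0"
    by (rule admissible_par_rel[OF assms]) (unfold par_rels_def, blast)
  then show ?thesis
    by (simp add: sweedler_def[symmetric] fmul_eq_times admissible_sweedler[OF assms]
        admissible_diff[OF assms] sweedler_diff_fun)
qed

lemma admissible_merge_left_S:
  assumes "admissible f"
  shows "sweedler (\<lambda>x y. f (gen h * gen (S x) * gen y)) k
      = sweedler (\<lambda>x y. f (gen (h * S x) * gen y)) k"
proof -
  have "f (\<Sum>(x, y)\<leftarrow>\<Delta> k. fmul (fmul (gen h) (gen (S x))) (gen y) - fmul (gen (h * S x)) (gen y)) = 0"
    by (rule admissible_par_rel[OF assms]) (unfold par_rels_def, blast)
  then show ?thesis
    by (simp add: sweedler_def[symmetric] fmul_eq_times admissible_sweedler[OF assms]
        admissible_diff[OF assms] sweedler_diff_fun)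
qed

lemma admissible_merge_right_S:
  assumes "admissible f"
  shows "sweedler (\<lambda>x y. f (gen x * gen (S y) * gen k)) h
      = sweedler (\<lambda>x y. f (gen x * gen (S y * k))) h"
proof -
  have "f (\<Sum>(x, y)\<leftarrow>\<Delta> h. fmul (fmul (gen x) (gen (S y))) (gen k) - fmul (gen x) (gen (S y * k))) = 0"
    by (rule admissible_par_rel[OF assms]) (unfold par_rels_def, blast)
  then show ?thesis
    by (simp add: sweedler_def[symmetric] fmul_eq_times admissible_sweedler[OF assms]
        admissible_diff[OF assms] sweedler_diff_fun)
qed

lemma admissible_merge_right:
  assumes "admissible f"
  shows "sweedler (\<lambda>x y. f (gen (S x) * gen y * gen k)) h
      = sweedler (\<lambda>x y. f (gen (S x) * gen (y * k))) h"
proof -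
  have "f (\<Sum>(x, y)\<leftarrow>\<Delta> h. fmul (fmul (gen (S x)) (gen y)) (gen k) - fmul (gen (S x)) (gen (y * k)))
      = 0"
    by (rule admissible_par_rel[OF assms]) (unfold par_rels_def, blast)
  then show ?thesis
    by (simp add: sweedler_def[symmetric] fmul_eq_times admissible_sweedler[OF assms]
        admissible_diff[OF assms] sweedler_diff_fun)
qed

lemma admissible_gen_expand:
  assumes "admissible f"
  shows "f (gen h) = sweedler (\<lambda>x y. sweedler (\<lambda>a b. f (gen a * gen (S b) * gen y)) x) h"
proof -
  have "f (gen h - (\<Sum>(x, y, z)\<leftarrow>delta2L \<Delta> h. fmul (fmul (gen x) (gen (S y))) (gen z))) = 0"
    by (rule admissible_par_rel[OF assms]) (unfold par_rels_def, blast)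
  then show ?thesis
    by (simp add: delta2L_def sum_list_map_concat comp_def split_def sweedler_def fmul_eq_times
        admissible_diff[OF assms] additive_sum_list admissible_add[OF assms])
qed

end

section \<open>The subalgebra generated by the \<open>E\<^sub>h\<close>\<close>

context weak_hopf
begin

definition Epar :: "'h \<Rightarrow> ('h, 'k) free_alg" where "Epar h = sweedler (\<lambda>x y. gen x * gen (S y)) h"
definition Fpar :: "'h \<Rightarrow> ('h, 'k) free_alg" where "Fpar h = sweedler (\<lambda>x y. gen (S x) * gen y) h"
definition act :: "'h \<Rightarrow> ('h, 'k) free_alg \<Rightarrow> ('h, 'k) free_alg" where
  "act h a = sweedler (\<lambda>x y. gen x * a * gen (S y)) h"

lemma Eh_eq_Epar: "Eh \<Delta> S h = Epar h"
  unfolding Eh_def Epar_def sweedler_def by (simp add: fmul_eq_times)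
lemma par_act_eq_act: "par_act \<Delta> S h a = act h a"
  unfolding par_act_def act_def sweedler_def by (simp add: fmul_eq_times)

lemma admissible_gen_expand_Epar: "admissible f \<Longrightarrow> f (gen h) = sweedler (\<lambda>u v. f (Epar u * gen v)) h"
  by (simp add: admissible_gen_expand Epar_def times_sweedler_free admissible_sweedler)

lemma admissible_gen_expand_Fpar: "admissible f \<Longrightarrow> f (gen h) = sweedler (\<lambda>u v. f (gen u * Fpar v)) h"
proof -
  assume A: "admissible f"
  have "f (gen h) = sweedler (\<lambda>x y. sweedler (\<lambda>a b. f (gen a * gen (S b) * gen y)) x) h"
    by (rule admissible_gen_expand[OF A])
  also have "\<dots> = sweedler (\<lambda>a w. sweedler (\<lambda>b c. f (gen a * gen (S b) * gen c)) w) h"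
    by (rule sweedler_coassoc[OF vector_space_field])
        (simp add: free_linear_simps admissible_linear_simps[OF A])
  also have "\<dots> = sweedler (\<lambda>u v. f (gen u * Fpar v)) h"
    by (simp add: Fpar_def times_sweedler_free admissible_sweedler[OF A] mult.assoc)
  finally show ?thesis .
qed

lemma admissible_Epar_one: "admissible f \<Longrightarrow> f (Epar 1) = f 1"
proof -
  assume A: "admissible f"
  note L = free_linear_simps admissible_linear_simps[OF A]
  have "f 1 = f (gen 1)" by (simp add: admissible_gen_one[OF A])
  also have "\<dots> = sweedler (\<lambda>x y. sweedler (\<lambda>a b. f (gen a * gen (S b) * gen y)) x) 1"
    by (rule admissible_gen_expand[OF A])
  also have "\<dots> = sweedler (\<lambda>x y. sweedler (\<lambda>a b. f (gen a * gen (S b * y))) x) 1"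
    by (rule sweedler_cong, rule admissible_merge_right_S[OF A])
  also have "\<dots> = sweedler (\<lambda>x y. sweedler (\<lambda>b c. f (gen x * gen (S b * c))) y) 1"
    by (rule sweedler_coassoc[OF vector_space_field]) (simp add: L)
  also have "\<dots> = sweedler (\<lambda>p q. f (gen (1 * p) * gen (S q))) 1"
    by (rule sweedler_eps_s_right[OF vector_space_field, of "\<lambda>u v. f (gen u * gen v)"])
        (simp add: L)
  also have "\<dots> = f (Epar 1)" by (simp add: Epar_def admissible_sweedler[OF A])
  finally show ?thesis by simp
qed

lemma admissible_Fpar_one: "admissible f \<Longrightarrow> f (Fpar 1) = f 1"
proof -
  assume A: "admissible f"
  note L = free_linear_simps admissible_linear_simps[OF A]
  have "f 1 = f (gen 1)" by (simp add: admissible_gen_one[OF A])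
  also have "\<dots> = sweedler (\<lambda>x y. sweedler (\<lambda>a b. f (gen a * gen (S b) * gen y)) x) 1"
    by (rule admissible_gen_expand[OF A])
  also have "\<dots> = sweedler (\<lambda>a w. sweedler (\<lambda>b c. f (gen a * gen (S b) * gen c)) w) 1"
    by (rule sweedler_coassoc[OF vector_space_field]) (simp add: L)
  also have "\<dots> = sweedler (\<lambda>a w. sweedler (\<lambda>b c. f (gen (a * S b) * gen c)) w) 1"
    by (rule sweedler_cong, rule admissible_merge_left_S[OF A])
  also have "\<dots> = sweedler (\<lambda>x y. sweedler (\<lambda>a b. f (gen (a * S b) * gen y)) x) 1"
    by (rule sweedler_coassoc[OF vector_space_field, symmetric]) (simp add: L)
  also have "\<dots> = sweedler (\<lambda>p q. f (gen (S p) * gen (q * 1))) 1"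
    by (rule sweedler_eps_t_left[OF vector_space_field, of "\<lambda>u v. f (gen u * gen v)"]) (simp add: L)
  also have "\<dots> = f (Fpar 1)" by (simp add: Fpar_def admissible_sweedler[OF A])
  finally show ?thesis by simp
qed

lemma admissible_unit_shift:
  assumes A: "admissible f"
  shows "sweedler (\<lambda>p q. f (gen x * gen p * gen (S q * y))) 1
      = sweedler (\<lambda>p q. f (gen (x * p) * gen (S q * y))) 1"
proof -
  note L = free_linear_simps admissible_linear_simps[OF A] Epar_def Fpar_def
  have "sweedler (\<lambda>p q. f (gen x * gen p * gen (S q * y))) 1
      = sweedler (\<lambda>p q. sweedler (\<lambda>u v. f (gen u * Fpar v * gen p * gen (S q * y))) x) 1"
  proof (rule sweedler_cong)
    fix p q
    have "f (gen x * (gen p * gen (S q * y)))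
        = sweedler (\<lambda>u v. f (gen u * Fpar v * (gen p * gen (S q * y)))) x"
      using admissible_gen_expand_Fpar[OF admissible_context_right[OF A,
          of "gen p * gen (S q * y)"], of x] by simp
    thus "f (gen x * gen p * gen (S q * y))
        = sweedler (\<lambda>u v. f (gen u * Fpar v * gen p * gen (S q * y))) x"
      by (simp add: mult.assoc)
  qed
  also have "\<dots> = sweedler (\<lambda>p q.
      sweedler (\<lambda>u v. sweedler (\<lambda>b c. f (gen u * gen (S b) * gen (c * p) * gen (S q * y))) v) x) 1"
  proof (rule sweedler_cong, rule sweedler_cong)
    fix p q u v
    have "f (gen u * Fpar v * gen p * gen (S q * y))
        = sweedler (\<lambda>b c. f (gen u * (gen (S b) * gen c * gen p) * gen (S q * y))) v"
      by (simp add: L)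
    also have "\<dots> = sweedler (\<lambda>b c. f (gen u * (gen (S b) * gen (c * p)) * gen (S q * y))) v"
      by (rule admissible_merge_right[OF admissible_context[OF A]])
    finally show "f (gen u * Fpar v * gen p * gen (S q * y))
        = sweedler (\<lambda>b c. f (gen u * gen (S b) * gen (c * p) * gen (S q * y))) v"
      by (simp add: mult.assoc)
  qed
  also have "\<dots> = sweedler (\<lambda>p q.
      sweedler (\<lambda>w c. sweedler (\<lambda>u b. f (gen u * gen (S b) * gen (c * p) * gen (S q * y))) w) x) 1"
    by (rule sweedler_cong, rule sweedler_coassoc[OF vector_space_field, symmetric]) (simp add: L)
  also have "\<dots> = sweedler (\<lambda>p q. sweedler (\<lambda>w c. f (Epar w * gen (c * p) * gen (S q * y))) x) 1"
    by (simp add: L)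
  also have "\<dots> = sweedler (\<lambda>w c. sweedler (\<lambda>p q. f (Epar w * gen (c * p) * gen (S q * y))) 1) x"
    by (rule sweedler_swap)
  finally have LHS: "sweedler (\<lambda>p q. f (gen x * gen p * gen (S q * y))) 1
      = sweedler (\<lambda>w c. sweedler (\<lambda>p q. f (Epar w * gen (c * p) * gen (S q * y))) 1) x" .
  define \<tau> where "\<tau> = (\<lambda>w1 c1 A B C. f (Epar (w1 * A) * gen (c1 * B) * gen (S C * y)))"
  have "sweedler (\<lambda>p q. f (gen (x * p) * gen (S q * y))) 1
      = sweedler (\<lambda>p q. sweedler (\<lambda>w c. f (Epar w * gen c * gen (S q * y))) (x * p)) 1"
    by (rule sweedler_cong, rule admissible_gen_expand_Epar[OF admissible_context_right[OF A]])
  also have "\<dots> = sweedler (\<lambda>p q.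
      sweedler (\<lambda>w1 c1. sweedler (\<lambda>w2 c2. f (Epar (w1 * w2) * gen (c1 * c2) * gen (S q * y))) p) x)
      1"
    by (rule sweedler_cong, rule sweedler_mult_arg[OF vector_space_field]) (simp add: L)
  also have "\<dots> = sweedler (\<lambda>w1 c1. sweedler (\<lambda>p q. sweedler (\<lambda>w2 c2. \<tau> w1 c1 w2 c2 q) p) 1) x"
    unfolding \<tau>_def by (rule sweedler_swap)
  also have "\<dots> = sweedler (\<lambda>w1 c1. sweedler (\<lambda>a b. sweedler (\<lambda>p' q'. \<tau> w1 c1 a (b * p') q') 1) 1) x"
    by (rule sweedler_cong, rule sweedler_comult_unit_right[OF vector_space_field, symmetric])
        (simp add: L \<tau>_def)
  also have "\<dots> = sweedler (\<lambda>w1 c1.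
      sweedler (\<lambda>a b. (\<lambda>U V. sweedler (\<lambda>p' q'. f (Epar U * gen (V * p') * gen (S q' * y))) 1)
      (w1 * a) (c1 * b)) 1) x"
    unfolding \<tau>_def by (simp add: mult.assoc)
  also have "\<dots> = sweedler (\<lambda>U V. sweedler (\<lambda>p' q'. f (Epar U * gen (V * p') * gen (S q' * y))) 1) x"
    by (rule sweedler_mult_unit[OF vector_space_field]) (simp add: L)
  finally show ?thesis using LHS by simp
qed

lemma admissible_unit_split:
  assumes A: "admissible f"
  shows "sweedler (\<lambda>p q. f (gen (x * p) * gen (S q * y))) 1 = f (gen x * gen y)"
proof -
  have "f (gen x * gen y) = f (gen x * Epar 1 * gen y)"
    using admissible_Epar_one[OF admissible_context[OF A, of "gen x" "gen y"]] by simp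
  also have "\<dots> = sweedler (\<lambda>p q. f (gen x * (gen p * gen (S q) * gen y))) 1"
    by (simp add: Epar_def times_sweedler_free admissible_sweedler[OF A] mult.assoc)
  also have "\<dots> = sweedler (\<lambda>p q. f (gen x * (gen p * gen (S q * y)))) 1"
    by (rule admissible_merge_right_S[OF admissible_context_left[OF A]])
  also have "\<dots> = sweedler (\<lambda>p q. f (gen (x * p) * gen (S q * y))) 1"
    using admissible_unit_shift[OF A, of x y] by (simp add: mult.assoc)
  finally show ?thesis by simp
qed

lemma admissible_gen_sweedler:
  assumes A: "admissible f"
  shows "f (P * gen (sweedler B w) * Q) = sweedler (\<lambda>a c. f (P * gen (B a c) * Q)) w"
  by (rule sweedler_additive[where L="\<lambda>z. f (P * gen z * Q)"])
    (simp add: gen_linear_simps distrib_left distrib_right admissible_linear_simps[OF A])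

lemma admissible_antipode_pair:
  assumes A: "admissible f"
  shows "f (gen (S m) * gen (S k)) = sweedler (\<lambda>a b. f (gen (S (a * m)) * Epar b)) k"
proof -
  note L = free_linear_simps admissible_linear_simps[OF A] Epar_def Fpar_def
  have "sweedler (\<lambda>a b. f (gen (S (a * m)) * Epar b)) k
      = sweedler (\<lambda>a b. sweedler (\<lambda>c d. f (gen (S (a * m)) * gen c * gen (S d))) b) k"
    by (simp add: L)
  also have "\<dots> = sweedler (\<lambda>a b. sweedler (\<lambda>c d. f (gen (S (a * m) * c) * gen (S d))) b) k"
    by (rule sweedler_cong, rule admissible_merge_left[OF A])
  also have "\<dots> = sweedler (\<lambda>a b. sweedler (\<lambda>c d. f (gen (S m * (S a * c)) * gen (S d))) b) k"
    by (simp add: antipode_mult mult.assoc)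
  also have "\<dots> = sweedler (\<lambda>w d. sweedler (\<lambda>a c. f (gen (S m * (S a * c)) * gen (S d))) w) k"
    by (rule sweedler_coassoc[OF vector_space_field, symmetric]) (simp add: L)
  also have "\<dots> = sweedler (\<lambda>w d. f (gen (S m * eps_s w) * gen (S d))) k"
    by (rule sweedler_cong)
        (simp add: comult_antipode_eps_s[symmetric] admissible_gen_sweedler[OF A, where P=1,
        simplified] sweedler_mult_left[symmetric])
  also have "\<dots> = sweedler (\<lambda>p q. f (gen (S m * p) * gen (S (k * q)))) 1"
    by (rule sweedler_eps_s_left[OF vector_space_field, of "\<lambda>U V. f (gen (S m * U) * gen (S V))"])
        (simp add: L)
  also have "\<dots> = sweedler (\<lambda>p q. f (gen (S m * p) * gen (S q * S k))) 1"
    by (simp add: antipode_mult)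
  also have "\<dots> = f (gen (S m) * gen (S k))" by (rule admissible_unit_split[OF A])
  finally show ?thesis by simp
qed

lemma admissible_gen_Epar:
  assumes A: "admissible f"
  shows "f (gen h * Epar k) = sweedler (\<lambda>x y. f (Epar (x * k) * gen y)) h"
proof -
  note L = free_linear_simps admissible_linear_simps[OF A] Epar_def Fpar_def
  define \<beta> where "\<beta> = (\<lambda>X Y. sweedler (\<lambda>k1 k2. f (gen (X * k1) * gen (S k2 * Y))) k)"
  have b\<beta>: "H_bilinear (*) \<beta>" unfolding \<beta>_def by (simp add: L)
  have "sweedler (\<lambda>x y. f (Epar (x * k) * gen y)) h
      = sweedler (\<lambda>x y. sweedler (\<lambda>u v. f (gen u * gen (S v) * gen y)) (x * k)) h"
    by (simp add: L)
  also have "\<dots> = sweedler (\<lambda>x y. sweedler (\<lambda>u v. f (gen u * gen (S v * y))) (x * k)) h"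
    by (rule sweedler_cong, rule admissible_merge_right_S[OF A])
  also have "\<dots> = sweedler (\<lambda>x y.
      sweedler (\<lambda>x1 x2. sweedler (\<lambda>k1 k2. f (gen (x1 * k1) * gen (S (x2 * k2) * y))) k) x) h"
    by (rule sweedler_cong, rule sweedler_mult_arg[OF vector_space_field]) (simp add: L)
  also have "\<dots> = sweedler (\<lambda>x y.
      sweedler (\<lambda>x1 x2. sweedler (\<lambda>k1 k2. f (gen (x1 * k1) * gen (S k2 * (S x2 * y)))) k) x) h"
    by (simp add: antipode_mult mult.assoc)
  also have "\<dots> = sweedler (\<lambda>x1 w.
      sweedler (\<lambda>x2 y. sweedler (\<lambda>k1 k2. f (gen (x1 * k1) * gen (S k2 * (S x2 * y)))) k) w) h"
    by (rule sweedler_coassoc[OF vector_space_field]) (simp add: L)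
  also have "\<dots> = sweedler (\<lambda>x1 w. sweedler (\<lambda>x2 y. \<beta> x1 (S x2 * y)) w) h" unfolding \<beta>_def ..
  also have "\<dots> = sweedler (\<lambda>p q. \<beta> (h * p) (S q)) 1"
    by (rule sweedler_eps_s_right[OF vector_space_field b\<beta>])
  also have "\<dots>
      = sweedler (\<lambda>p q. sweedler (\<lambda>k1 k2. (\<lambda>U V. f (gen (h * U) * gen (S V))) (p * k1) (q * k2)) k)
      1"
    unfolding \<beta>_def by (simp add: antipode_mult mult.assoc)
  also have "\<dots> = sweedler (\<lambda>U V. f (gen (h * U) * gen (S V))) k"
    by (rule sweedler_unit_mult[OF vector_space_field]) (simp add: L)
  also have "\<dots> = sweedler (\<lambda>k1 k2. f (gen h * gen k1 * gen (S k2))) k"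
    by (rule admissible_merge_left[OF A, symmetric])
  also have "\<dots> = f (gen h * Epar k)" by (simp add: L)
  finally show ?thesis by simp
qed

lemma admissible_gen_Epar_Fpar:
  assumes A: "admissible f"
  shows "f (gen h * Epar k) = sweedler (\<lambda>x y. f (gen x * Epar k * Fpar y)) h"
proof -
  note L = free_linear_simps admissible_linear_simps[OF A] Epar_def Fpar_def
  have "sweedler (\<lambda>x y. f (gen x * Epar k * Fpar y)) h
      = sweedler (\<lambda>x y.
          sweedler (\<lambda>b c.
          sweedler (\<lambda>k1 k2. f (gen x * gen k1 * gen (S k2) * (gen (S b) * gen c))) k) y) h"
    by (simp add: L)
  also have "\<dots> = sweedler (\<lambda>x y.
      sweedler (\<lambda>b c. sweedler (\<lambda>k1 k2. f (gen (x * k1) * gen (S k2) * (gen (S b) * gen c))) k) y)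
      h"
    by (intro sweedler_cong admissible_merge_left[OF admissible_context_right[OF A]])
  also have "\<dots> = sweedler (\<lambda>x y.
      sweedler (\<lambda>k1 k2. sweedler (\<lambda>b c. f (gen (x * k1) * (gen (S k2) * gen (S b) * gen c))) y) k)
      h"
    by (rule sweedler_cong, subst sweedler_swap, simp add: mult.assoc)
  also have "\<dots> = sweedler (\<lambda>x y.
      sweedler (\<lambda>k1 k2. sweedler (\<lambda>b c. f (gen (x * k1) * (gen (S k2 * S b) * gen c))) y) k) h"
    by (intro sweedler_cong admissible_merge_left_S[OF admissible_context_left[OF A]])
  also have "\<dots> = sweedler (\<lambda>x y.
      sweedler (\<lambda>b c. sweedler (\<lambda>k1 k2. f (gen (x * k1) * gen (S (b * k2)) * gen c)) k) y) h"
    by (rule sweedler_cong, subst sweedler_swap, simp add: mult.assoc antipode_mult)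
  also have "\<dots> = sweedler (\<lambda>u c.
      sweedler (\<lambda>x b. sweedler (\<lambda>k1 k2. f (gen (x * k1) * gen (S (b * k2)) * gen c)) k) u) h"
    by (rule sweedler_coassoc[OF vector_space_field, symmetric]) (simp add: L)
  also have "\<dots> = sweedler (\<lambda>u c. sweedler (\<lambda>U V. f (gen U * gen (S V) * gen c)) (u * k)) h"
    by (rule sweedler_cong, rule sweedler_mult_arg[OF vector_space_field, symmetric]) (simp add: L)
  also have "\<dots> = sweedler (\<lambda>x y. f (Epar (x * k) * gen y)) h" by (simp add: L)
  also have "\<dots> = f (gen h * Epar k)" by (rule admissible_gen_Epar[OF A, symmetric])
  finally show ?thesis by simp
qed

section \<open>The action on \<open>A\<^sub>p\<^sub>a\<^sub>r\<^sup>w\<close>\<close>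

definition split_inv :: "('h, 'k) free_alg \<Rightarrow> bool" where
  "split_inv a \<longleftrightarrow> (\<forall>f h. admissible f \<longrightarrow> f (gen h * a) = sweedler (\<lambda>x y. f (gen x * a * Fpar y)) h)"

lemma split_invD: "split_inv a \<Longrightarrow> admissible f \<Longrightarrow> f (gen h * a)
    = sweedler (\<lambda>x y. f (gen x * a * Fpar y)) h"
  unfolding split_inv_def by blast

lemma split_inv_one: "split_inv 1"
  unfolding split_inv_def by (auto simp: admissible_gen_expand_Fpar)

lemma split_inv_add: "split_inv p \<Longrightarrow> split_inv q \<Longrightarrow> split_inv (p + q)"
  unfolding split_inv_def by (auto simp: distrib_left distrib_right admissible_add sweedler_add_fun)

lemma split_inv_fsc: "split_inv p \<Longrightarrow> split_inv (fsc c p)"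
  unfolding split_inv_def
  by (simp add: fsc_mult_left fsc_mult_right admissible_fsc sweedler_mult_left)

lemma split_inv_cong: "split_inv q \<Longrightarrow> par_eq sc \<Delta> S p q \<Longrightarrow> split_inv p"
  unfolding split_inv_def
proof (intro allI impI)
  fix f h assume P: "\<forall>f h. admissible f \<longrightarrow> f (gen h * q) = sweedler (\<lambda>x y. f (gen x * q * Fpar y)) h"
    and E: "par_eq sc \<Delta> S p q" and A: "admissible f"
  have "f (gen h * p) = f (gen h * q)" using par_eqD[OF E A, of "gen h" 1] by simp
  also have "\<dots> = sweedler (\<lambda>x y. f (gen x * q * Fpar y)) h" using P A by blast
  also have "\<dots> = sweedler (\<lambda>x y. f (gen x * p * Fpar y)) h"
    by (rule sweedler_cong) (simp add: par_eqD[OF E A])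
  finally show "f (gen h * p) = sweedler (\<lambda>x y. f (gen x * p * Fpar y)) h" .
qed

lemma split_inv_mult:
  assumes Pa: "split_inv a" and Pb: "split_inv b"
  shows "split_inv (a * b)"
  unfolding split_inv_def
proof (intro allI impI)
  fix f h assume A: "admissible f"
  note L = free_linear_simps admissible_linear_simps[OF A] Epar_def Fpar_def
  define T where "T = (\<lambda>x c d1 d2. f (gen x * a * gen (S c) * gen d1 * b * Fpar d2))"
  have Q: "H_quadrilinear T" unfolding T_def H_quadrilinear_def by (simp add: L)
  have "f (gen h * (a * b)) = f (gen h * a * b)" by (simp add: mult.assoc)
  also have "\<dots> = sweedler (\<lambda>x y. f (gen x * a * Fpar y * b)) h"
    using split_invD[OF Pa admissible_context_right[OF A, of b], of h] by simp
  also have "\<dots> = sweedler (\<lambda>x y. sweedler (\<lambda>c d. f (gen x * a * gen (S c) * (gen d * b))) y) h"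
    by (simp add: L)
  also have "\<dots> = sweedler (\<lambda>x y. sweedler (\<lambda>c d. sweedler (\<lambda>d1 d2. T x c d1 d2) d) y) h"
    unfolding T_def
  proof (intro sweedler_cong)
    fix x y c d
    show "f (gen x * a * gen (S c) * (gen d * b))
        = sweedler (\<lambda>d1 d2. f (gen x * a * gen (S c) * gen d1 * b * Fpar d2)) d"
      using split_invD[OF Pb admissible_context_left[OF A, of "gen x * a * gen (S c)"], of d]
      by (simp add: mult.assoc)
  qed
  also have "\<dots> = sweedler4 T h" unfolding sweedler4_def ..
  also have "\<dots> = sweedler (\<lambda>z d2. sweedler (\<lambda>x w. sweedler (\<lambda>c d1. T x c d1 d2) w) z) h"
    by (rule sweedler4_middle_nested[OF Q, symmetric])
  also have "\<dots> = sweedler (\<lambda>z d2. sweedler (\<lambda>x w. f (gen x * a * Fpar w * b * Fpar d2)) z) h"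
    unfolding T_def
  proof (intro sweedler_cong)
    fix z d2 x w
    show "sweedler (\<lambda>c d1. f (gen x * a * gen (S c) * gen d1 * b * Fpar d2)) w
        = f (gen x * a * Fpar w * b * Fpar d2)"
      unfolding Fpar_def[of w] by (simp add: free_linear_simps admissible_sweedler[OF A] mult.assoc)
  qed
  also have "\<dots> = sweedler (\<lambda>z d2. f (gen z * a * b * Fpar d2)) h"
  proof (rule sweedler_cong)
    fix z d2
    show "sweedler (\<lambda>x w. f (gen x * a * Fpar w * b * Fpar d2)) z = f (gen z * a * b * Fpar d2)"
      using split_invD[OF Pa admissible_context_right[OF A, of "b * Fpar d2"], of z]
      by (simp add: mult.assoc)
  qed
  finally show "f (gen h * (a * b)) = sweedler (\<lambda>x y. f (gen x * (a * b) * Fpar y)) h"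
    by (simp add: mult.assoc)
qed

lemma split_inv_Epar: "split_inv (Epar k)"
  unfolding split_inv_def using admissible_gen_Epar_Fpar by blast

lemma split_inv_Apar: "a \<in> Apar sc \<Delta> S \<Longrightarrow> split_inv a"
proof (induction rule: Apar.induct)
  case (E h) show ?case by (simp add: Eh_eq_Epar split_inv_Epar)
next
  case unit show ?case by (simp add: funit_eq_one split_inv_one)
next
  case (add p q) thus ?case by (intro split_inv_add add.IH)
next
  case (smult p c) thus ?case by (simp add: split_inv_fsc smult.IH)
next
  case (mult p q) thus ?case by (simp add: fmul_eq_times split_inv_mult mult.IH)
next
  case (cong q p) thus ?case using split_inv_cong by blast
qed

lemma act_add: "act h (p + q) = act h p + act h q"
  unfolding act_def by (simp add: distrib_left distrib_right sweedler_add_fun)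
lemma act_fsc: "act h (fsc c p) = fsc c (act h p)"
  unfolding act_def
  by (simp add: fsc_mult_left fsc_mult_right fsc_add sweedler_additive[of "fsc c"])
lemma act_one: "act h 1 = Epar h" unfolding act_def Epar_def by simp

lemma admissible_act: "admissible f \<Longrightarrow> f (act h a) = sweedler (\<lambda>x y. f (gen x * a * gen (S y))) h"
  unfolding act_def by (rule admissible_sweedler)

lemma admissible_act_Epar:
  assumes A: "admissible f"
  shows "f (act h (Epar k)) = sweedler (\<lambda>x y. f (Epar (x * k) * Epar y)) h"
proof -
  note L = free_linear_simps admissible_linear_simps[OF A] Epar_def Fpar_def
  have "f (act h (Epar k)) = sweedler (\<lambda>x y. f (gen x * Epar k * gen (S y))) h"
    by (rule admissible_act[OF A])
  also have "\<dots> = sweedler (\<lambda>x y. sweedler (\<lambda>x1 x2. f (Epar (x1 * k) * gen x2 * gen (S y))) x) h"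
  proof (rule sweedler_cong)
    fix x y
    show "f (gen x * Epar k * gen (S y))
        = sweedler (\<lambda>x1 x2. f (Epar (x1 * k) * gen x2 * gen (S y))) x"
      using admissible_gen_Epar[OF admissible_context_right[OF A, of "gen (S y)"], of x k] by simp
  qed
  also have "\<dots> = sweedler (\<lambda>x1 w. sweedler (\<lambda>x2 y. f (Epar (x1 * k) * gen x2 * gen (S y))) w) h"
    by (rule sweedler_coassoc[OF vector_space_field]) (simp add: L)
  also have "\<dots> = sweedler (\<lambda>x y. f (Epar (x * k) * Epar y)) h"
    by (rule sweedler_cong) (simp add: Epar_def[of y
      for y] times_sweedler_free admissible_sweedler[OF A] mult.assoc)
  finally show ?thesis .
qed

lemma admissible_act_mult:
  assumes Pa: "split_inv a" and A: "admissible f"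
  shows "f (act h (a * b)) = sweedler (\<lambda>x y. f (act x a * act y b)) h"
proof -
  note L = free_linear_simps admissible_linear_simps[OF A] Epar_def Fpar_def
  define T where "T = (\<lambda>x1 x2 y1 y2. f (gen x1 * a * gen (S x2) * gen y1 * b * gen (S y2)))"
  have Q: "H_quadrilinear T" unfolding T_def H_quadrilinear_def by (simp add: L)
  have "sweedler (\<lambda>x y. f (act x a * act y b)) h
      = sweedler (\<lambda>x y. sweedler (\<lambda>x1 x2. sweedler (\<lambda>y1 y2. T x1 x2 y1 y2) y) x) h"
    unfolding T_def
  proof (rule sweedler_cong)
    fix x y
    show "f (act x a * act y b)
        = sweedler (\<lambda>x1 x2.
        sweedler (\<lambda>y1 y2. f (gen x1 * a * gen (S x2) * gen y1 * b * gen (S y2))) y) x"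
      unfolding act_def
      by (simp add: sweedler_mult_right[symmetric]
        sweedler_mult_left[symmetric] admissible_sweedler[OF A] mult.assoc) (rule sweedler_swap)
  qed
  also have "\<dots> = sweedler4 T h" by (rule sweedler4_balanced[OF Q])
  also have "\<dots> = sweedler (\<lambda>z y2. sweedler (\<lambda>x1 v. sweedler (\<lambda>x2 y1. T x1 x2 y1 y2) v) z) h"
    by (rule sweedler4_middle_nested[OF Q, symmetric])
  also have "\<dots> = sweedler (\<lambda>z y2. f (gen z * (a * b) * gen (S y2))) h"
    unfolding T_def
  proof (rule sweedler_cong)
    fix z y2
    have "sweedler
        (\<lambda>x1 v. sweedler (\<lambda>x2 y1. f (gen x1 * a * gen (S x2) * gen y1 * b * gen (S y2))) v) z
        = sweedler (\<lambda>x1 v. f (gen x1 * a * Fpar v * b * gen (S y2))) z"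
      by (rule sweedler_cong) (simp add: Fpar_def[of v
        for v] times_sweedler_free admissible_sweedler[OF A] mult.assoc)
    also have "\<dots> = f (gen z * a * (b * gen (S y2)))"
      using split_invD[OF Pa admissible_context_right[OF A, of "b * gen (S y2)"], of z]
      by (simp add: mult.assoc)
    finally show "sweedler
        (\<lambda>x1 v. sweedler (\<lambda>x2 y1. f (gen x1 * a * gen (S x2) * gen y1 * b * gen (S y2))) v) z
        = f (gen z * (a * b) * gen (S y2))" by (simp add: mult.assoc)
  qed
  also have "\<dots> = f (act h (a * b))" by (rule admissible_act[OF A, symmetric])
  finally show ?thesis by simp
qed

lemma Apar_zero: "0 \<in> Apar sc \<Delta> S"
proof -
  have "fsc 0 funit \<in> Apar sc \<Delta> S" by (intro Apar.smult Apar.unit)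
  thus ?thesis by (simp add: fsc_eq_times)
qed

lemma Apar_sum_list: "(\<And>x y. P x y \<in> Apar sc \<Delta> S) \<Longrightarrow> (\<Sum>(x,y)\<leftarrow>t. P x y) \<in> Apar sc \<Delta> S"
  by (induction t) (auto intro: Apar_zero Apar.add)

lemma Apar_sweedler: "(\<And>x y. P x y \<in> Apar sc \<Delta> S) \<Longrightarrow> sweedler P h \<in> Apar sc \<Delta> S"
  unfolding sweedler_def by (rule Apar_sum_list)

lemma Apar_mult: "p \<in> Apar sc \<Delta> S \<Longrightarrow> q \<in> Apar sc \<Delta> S \<Longrightarrow> p * q \<in> Apar sc \<Delta> S"
  using Apar.mult[of p sc \<Delta> S q] by (simp add: fmul_eq_times)

lemma Apar_Epar: "Epar h \<in> Apar sc \<Delta> S" using Apar.E[of \<Delta> S h sc] by (simp add: Eh_eq_Epar)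

lemma Apar_admissible_cong: "q \<in> Apar sc \<Delta> S \<Longrightarrow> (\<And>f. admissible f \<Longrightarrow> f p = f q) \<Longrightarrow> p \<in> Apar sc \<Delta> S"
  by (rule Apar.cong[of q]) (auto simp: par_eq_iff_admissible)

lemma act_in_Apar: "a \<in> Apar sc \<Delta> S \<Longrightarrow> act h a \<in> Apar sc \<Delta> S"
proof (induction arbitrary: h rule: Apar.induct)
  case (E k)
  have "sweedler (\<lambda>x y. Epar (x * k) * Epar y) h \<in> Apar sc \<Delta> S"
    by (intro Apar_sweedler Apar_mult Apar_Epar)
  thus ?case by (rule Apar_admissible_cong)
      (simp add: Eh_eq_Epar admissible_act_Epar admissible_sweedler)
next
  case unit show ?case by (simp add: funit_eq_one act_one Apar_Epar)
next
  case (add p q) thus ?case by (simp add: act_add Apar.add)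
next
  case (smult p c)
  have "fsc c (act h p) \<in> Apar sc \<Delta> S" using smult.IH by (rule Apar.smult)
  thus ?case by (simp add: act_fsc)
next
  case (mult p q)
  have "sweedler (\<lambda>x y. act x p * act y q) h \<in> Apar sc \<Delta> S"
    by (intro Apar_sweedler Apar_mult mult.IH)
  thus ?case by (rule Apar_admissible_cong)
      (simp add: fmul_eq_times admissible_act_mult[OF split_inv_Apar[OF mult.hyps(1)]]
      admissible_sweedler)
next
  case (cong q p)
  have "act h q \<in> Apar sc \<Delta> S" by (rule cong.IH)
  thus ?case by (rule Apar_admissible_cong) (simp add: admissible_act par_eqD[OF cong.hyps(2)])
qed

definition merge_inv :: "('h, 'k) free_alg \<Rightarrow> bool" where
  "merge_inv a \<longleftrightarrow> (\<forall>f k n. admissible f \<longrightarrow>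
     sweedler (\<lambda>x y. f (gen x * a * gen (S y) * gen n)) k =
         sweedler (\<lambda>x y. f (gen x * a * gen (S y * n))) k)"

lemma merge_invD: "merge_inv a \<Longrightarrow> admissible f \<Longrightarrow>
     sweedler (\<lambda>x y. f (gen x * a * gen (S y) * gen n)) k =
         sweedler (\<lambda>x y. f (gen x * a * gen (S y * n))) k"
  unfolding merge_inv_def by blast

lemma merge_inv_one: "merge_inv 1" unfolding merge_inv_def by (simp add: admissible_merge_right_S)

lemma merge_inv_add: "merge_inv p \<Longrightarrow> merge_inv q \<Longrightarrow> merge_inv (p + q)"
  unfolding merge_inv_def by (auto simp: distrib_left distrib_right admissible_add sweedler_add_fun)

lemma merge_inv_fsc: "merge_inv p \<Longrightarrow> merge_inv (fsc c p)"
  unfolding merge_inv_def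
  by (simp add: fsc_mult_left fsc_mult_right admissible_fsc sweedler_mult_left)

lemma merge_inv_cong:
  assumes R: "merge_inv q" and E: "par_eq sc \<Delta> S p q"
  shows "merge_inv p"
  unfolding merge_inv_def
proof (intro allI impI)
  fix f k n assume A: "admissible f"
  have "sweedler (\<lambda>x y. f (gen x * p * gen (S y) * gen n)) k
      = sweedler (\<lambda>x y. f (gen x * q * gen (S y) * gen n)) k"
    by (rule sweedler_cong) (use par_eqD[OF E A] in \<open>simp add: mult.assoc\<close>)
  also have "\<dots> = sweedler (\<lambda>x y. f (gen x * q * gen (S y * n))) k" by (rule merge_invD[OF R A])
  also have "\<dots> = sweedler (\<lambda>x y. f (gen x * p * gen (S y * n))) k"
    by (rule sweedler_cong) (simp add: par_eqD[OF E A])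
  finally show "sweedler (\<lambda>x y. f (gen x * p * gen (S y) * gen n)) k
      = sweedler (\<lambda>x y. f (gen x * p * gen (S y * n))) k" .
qed

lemma merge_inv_Epar: "merge_inv (Epar m)"
  unfolding merge_inv_def
proof (intro allI impI)
  fix f k n assume A: "admissible f"
  note L = free_linear_simps admissible_linear_simps[OF A] Epar_def Fpar_def
  have "sweedler (\<lambda>x y. f (gen x * Epar m * gen (S y) * gen n)) k
      = sweedler (\<lambda>x y. sweedler (\<lambda>x1 x2. f (Epar (x1 * m) * gen x2 * gen (S y) * gen n)) x) k"
  proof (rule sweedler_cong)
    fix x y show "f (gen x * Epar m * gen (S y) * gen n)
        = sweedler (\<lambda>x1 x2. f (Epar (x1 * m) * gen x2 * gen (S y) * gen n)) x"
      using admissible_gen_Epar[OF admissible_context_right[OF A, of "gen (S y) * gen n"], of x m]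
      by (simp add: mult.assoc)
  qed
  also have "\<dots>
      = sweedler (\<lambda>x1 w. sweedler (\<lambda>x2 y. f (Epar (x1 * m) * gen x2 * gen (S y) * gen n)) w) k"
    by (rule sweedler_coassoc[OF vector_space_field]) (simp add: L)
  also have "\<dots> = sweedler (\<lambda>x1 w. sweedler (\<lambda>x2 y. f (Epar (x1 * m) * gen x2 * gen (S y * n))) w) k"
  proof (rule sweedler_cong)
    fix x1 w
    show "sweedler (\<lambda>x2 y. f (Epar (x1 * m) * gen x2 * gen (S y) * gen n)) w
        = sweedler (\<lambda>x2 y. f (Epar (x1 * m) * gen x2 * gen (S y * n))) w"
      using admissible_merge_right_S[OF admissible_context_left[OF A, of "Epar (x1 * m)"],
          where h=w and k=n] by (simp add: mult.assoc)
  qed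
  also have "\<dots> = sweedler (\<lambda>x y. sweedler (\<lambda>x1 x2. f (Epar (x1 * m) * gen x2 * gen (S y * n))) x) k"
    by (rule sweedler_coassoc[OF vector_space_field, symmetric]) (simp add: L)
  also have "\<dots> = sweedler (\<lambda>x y. f (gen x * Epar m * gen (S y * n))) k"
  proof (rule sweedler_cong)
    fix x y show "sweedler (\<lambda>x1 x2. f (Epar (x1 * m) * gen x2 * gen (S y * n))) x
        = f (gen x * Epar m * gen (S y * n))"
      using admissible_gen_Epar[OF admissible_context_right[OF A, of "gen (S y * n)"], of x m]
      by (simp add: mult.assoc)
  qed
  finally show "sweedler (\<lambda>x y. f (gen x * Epar m * gen (S y) * gen n)) k
      = sweedler (\<lambda>x y. f (gen x * Epar m * gen (S y * n))) k" .
qed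

lemma merge_inv_mult:
  assumes Pa: "split_inv a" and Rb: "merge_inv b"
  shows "merge_inv (a * b)"
  unfolding merge_inv_def
proof (intro allI impI)
  fix f k n assume A: "admissible f"
  note L = free_linear_simps admissible_linear_simps[OF A] Epar_def Fpar_def
  define T where "T = (\<lambda>x1 c d y. f (gen x1 * a * gen (S c) * gen d * b * gen (S y) * gen n))"
  define T' where "T' = (\<lambda>x1 c d y. f (gen x1 * a * gen (S c) * gen d * b * gen (S y * n)))"
  have QT: "H_quadrilinear T" unfolding T_def H_quadrilinear_def by (simp add: L)
  have QT': "H_quadrilinear T'" unfolding T'_def H_quadrilinear_def by (simp add: L)
  have "sweedler (\<lambda>x y. f (gen x * (a * b) * gen (S y) * gen n)) k
      = sweedler (\<lambda>x y. sweedler (\<lambda>x1 x2. sweedler (\<lambda>c d. T x1 c d y) x2) x) k"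
    unfolding T_def
  proof (rule sweedler_cong)
    fix x y
    have "f (gen x * (a * b) * gen (S y) * gen n)
        = sweedler (\<lambda>x1 x2. f (gen x1 * a * Fpar x2 * (b * gen (S y) * gen n))) x"
      using split_invD[OF Pa admissible_context_right[OF A, of "b * gen (S y) * gen n"], of x]
      by (simp add: mult.assoc)
    also have "\<dots> = sweedler (\<lambda>x1 x2.
        sweedler (\<lambda>c d. f (gen x1 * a * gen (S c) * gen d * b * gen (S y) * gen n)) x2) x"
      by (rule sweedler_cong) (simp add: Fpar_def[of x2
        for x2] times_sweedler_free admissible_sweedler[OF A] mult.assoc)
    finally show "f (gen x * (a * b) * gen (S y) * gen n)
        = sweedler (\<lambda>x1 x2.
        sweedler (\<lambda>c d. f (gen x1 * a * gen (S c) * gen d * b * gen (S y) * gen n)) x2) x" .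
  qed
  also have "\<dots> = sweedler4 T k" by (rule sweedler4_middle_nested[OF QT])
  also have "\<dots> = sweedler4 T' k"
    unfolding sweedler4_def T_def T'_def
  proof (rule sweedler_cong, rule sweedler_cong)
    fix x1 w c v
    show "sweedler (\<lambda>d y. f (gen x1 * a * gen (S c) * gen d * b * gen (S y) * gen n)) v
        = sweedler (\<lambda>d y. f (gen x1 * a * gen (S c) * gen d * b * gen (S y * n))) v"
      using merge_invD[OF Rb admissible_context_left[OF A, of "gen x1 * a * gen (S c)"], of n v]
      by (simp add: mult.assoc)
  qed
  also have "\<dots> = sweedler (\<lambda>x y. sweedler (\<lambda>x1 x2. sweedler (\<lambda>c d. T' x1 c d y) x2) x) k"
    by (rule sweedler4_middle_nested[OF QT', symmetric])
  also have "\<dots> = sweedler (\<lambda>x y. f (gen x * (a * b) * gen (S y * n))) k"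
    unfolding T'_def
  proof (rule sweedler_cong)
    fix x y
    have "sweedler
        (\<lambda>x1 x2. sweedler (\<lambda>c d. f (gen x1 * a * gen (S c) * gen d * b * gen (S y * n))) x2) x
        = sweedler (\<lambda>x1 x2. f (gen x1 * a * Fpar x2 * (b * gen (S y * n)))) x"
      by (rule sweedler_cong) (simp add: Fpar_def[of x2
        for x2] times_sweedler_free admissible_sweedler[OF A] mult.assoc)
    also have "\<dots> = f (gen x * (a * b) * gen (S y * n))"
      using split_invD[OF Pa admissible_context_right[OF A, of "b * gen (S y * n)"], of x]
      by (simp add: mult.assoc)
    finally show "sweedler
        (\<lambda>x1 x2. sweedler (\<lambda>c d. f (gen x1 * a * gen (S c) * gen d * b * gen (S y * n))) x2) x
        = f (gen x * (a * b) * gen (S y * n))" .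
  qed
  finally show "sweedler (\<lambda>x y. f (gen x * (a * b) * gen (S y) * gen n)) k
      = sweedler (\<lambda>x y. f (gen x * (a * b) * gen (S y * n))) k" .
qed

lemma merge_inv_Apar: "a \<in> Apar sc \<Delta> S \<Longrightarrow> merge_inv a"
proof (induction rule: Apar.induct)
  case (E h) show ?case by (simp add: Eh_eq_Epar merge_inv_Epar)
next
  case unit show ?case by (simp add: funit_eq_one merge_inv_one)
next
  case (add p q) thus ?case by (intro merge_inv_add add.IH)
next
  case (smult p c) thus ?case by (simp add: merge_inv_fsc smult.IH)
next
  case (mult p q) thus ?case by (simp add: fmul_eq_times merge_inv_mult split_inv_Apar mult.IH)
next
  case (cong q p) thus ?case using merge_inv_cong by blast
qed

lemma admissible_act_one:
  assumes Ap: "a \<in> Apar sc \<Delta> S" and A: "admissible f"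
  shows "f (act 1 a) = f a"
proof -
  note L = free_linear_simps admissible_linear_simps[OF A] Epar_def Fpar_def
  have Pa: "split_inv a" by (rule split_inv_Apar[OF Ap])
  have Ra: "merge_inv a" by (rule merge_inv_Apar[OF Ap])
  have "f a = f (gen 1 * a)" using admissible_gen_one[OF admissible_context_right[OF A, of a]]
    by simp
  also have "\<dots> = sweedler (\<lambda>x y. f (gen x * a * Fpar y)) 1" by (rule split_invD[OF Pa A])
  also have "\<dots> = sweedler (\<lambda>x y. sweedler (\<lambda>c d. f (gen x * a * gen (S c) * gen d)) y) 1"
    by (rule sweedler_cong) (simp add: Fpar_def[of y
      for y] times_sweedler_free admissible_sweedler[OF A] mult.assoc)
  also have "\<dots> = sweedler (\<lambda>w d. sweedler (\<lambda>x c. f (gen x * a * gen (S c) * gen d)) w) 1"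
    by (rule sweedler_coassoc[OF vector_space_field, symmetric]) (simp add: L)
  also have "\<dots> = sweedler (\<lambda>w d. sweedler (\<lambda>x c. f (gen x * a * gen (S c * d))) w) 1"
    by (rule sweedler_cong, rule merge_invD[OF Ra A])
  also have "\<dots> = sweedler (\<lambda>x y. sweedler (\<lambda>c d. f (gen x * a * gen (S c * d))) y) 1"
    by (rule sweedler_coassoc[OF vector_space_field]) (simp add: L)
  also have "\<dots> = sweedler (\<lambda>p q. f (gen (1 * p) * a * gen (S q))) 1"
    by (rule sweedler_eps_s_right[OF vector_space_field, of "\<lambda>X Y. f (gen X * a * gen Y)"])
        (simp add: L)
  also have "\<dots> = f (act 1 a)" by (simp add: admissible_act[OF A])
  finally show ?thesis by simp
qed

lemma admissible_act_act_merge: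
  assumes Ra: "merge_inv a" and A: "admissible f"
  shows "f (act h (act k a))
      = sweedler (\<lambda>x y. sweedler (\<lambda>u v. f (gen x * gen u * a * gen (S (y * v)))) k) h"
proof -
  have "f (act h (act k a))
      = sweedler (\<lambda>x y. sweedler (\<lambda>u v. f (gen x * gen u * a * gen (S v) * gen (S y))) k) h"
    by (simp add: act_def times_sweedler_free admissible_sweedler[OF A] mult.assoc)
  also have "\<dots> = sweedler (\<lambda>x y. sweedler (\<lambda>u v. f (gen x * gen u * a * gen (S (y * v)))) k) h"
  proof (rule sweedler_cong)
    fix x y
    show "sweedler (\<lambda>u v. f (gen x * gen u * a * gen (S v) * gen (S y))) k
        = sweedler (\<lambda>u v. f (gen x * gen u * a * gen (S (y * v)))) k"
      using merge_invD[OF Ra admissible_context_left[OF A, of "gen x"], of "S y" k]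
      by (simp add: mult.assoc antipode_mult)
  qed
  finally show ?thesis .
qed

lemma admissible_gen_antipode_absorb:
  assumes A: "admissible f"
  shows "sweedler (\<lambda>x1 v. sweedler (\<lambda>x2 y1. f (gen x1 * gen (S x2 * (y1 * k)) * R)) v) z
    = f (gen z * gen k * R)"
proof -
  define \<beta> where "\<beta> = (\<lambda>X Y. f (gen X * gen (Y * k) * R))"
  have "H_bilinear (*) \<beta>"
    unfolding \<beta>_def by (simp add: free_linear_simps admissible_linear_simps[OF A])
  then have "sweedler (\<lambda>x y. sweedler (\<lambda>a b. \<beta> x (S a * b)) y) z
      = sweedler (\<lambda>p q. \<beta> (z * p) (S q)) 1"
    by (rule sweedler_eps_s_right[OF vector_space_field])
  moreover have "sweedler (\<lambda>p q. f (gen (z * p) * gen (S q * k) * R)) 1 = f (gen z * gen k * R)"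
    using admissible_unit_split[OF admissible_context_right[OF A, of R], of z k]
    by (simp add: mult.assoc)
  ultimately show ?thesis by (simp add: \<beta>_def mult.assoc)
qed

lemma admissible_act_one_act:
  assumes A: "admissible f"
  shows "sweedler (\<lambda>x y. f (act x 1 * act (y * k) a)) h
    = sweedler (\<lambda>x y. sweedler (\<lambda>u v. f (gen x * gen u * a * gen (S (y * v)))) k) h"
proof -
  note L = free_linear_simps admissible_linear_simps[OF A]
  define T where "T
      = (\<lambda>k1 k2 x1 x2 y1 y2. f (gen x1 * gen (S x2 * (y1 * k1)) * a * gen (S (y2 * k2))))"
  have QT: "H_quadrilinear (T k1 k2)" for k1 k2 unfolding T_def H_quadrilinear_def by (simp add: L)
  have "sweedler (\<lambda>x y. f (act x 1 * act (y * k) a)) h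
      = sweedler (\<lambda>x y.
          sweedler (\<lambda>w1 w2. sweedler (\<lambda>x1 x2. f (gen x1 * gen (S x2) * gen w1 * a * gen (S w2))) x)
          (y * k)) h"
    by (rule sweedler_cong)
      (simp add: act_one Epar_def act_def times_sweedler_free admissible_sweedler[OF A] mult.assoc;
        rule sweedler_swap)
  also have "\<dots> = sweedler (\<lambda>x y.
      sweedler (\<lambda>w1 w2. sweedler (\<lambda>x1 x2. f (gen x1 * gen (S x2 * w1) * a * gen (S w2))) x) (y * k))
      h"
  proof (rule sweedler_cong, rule sweedler_cong)
    fix x y w1 w2
    show "sweedler (\<lambda>x1 x2. f (gen x1 * gen (S x2) * gen w1 * a * gen (S w2))) x
        = sweedler (\<lambda>x1 x2. f (gen x1 * gen (S x2 * w1) * a * gen (S w2))) x"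
      using admissible_merge_right_S[OF admissible_context_right[OF A, of "a * gen (S w2)"],
          where h=x and k=w1]
      by (simp add: mult.assoc)
  qed
  also have "\<dots> = sweedler (\<lambda>x y.
      sweedler (\<lambda>y1 y2. sweedler (\<lambda>k1 k2. sweedler (\<lambda>x1 x2. T k1 k2 x1 x2 y1 y2) x) k) y) h"
    unfolding T_def
    by (rule sweedler_cong, rule sweedler_mult_arg[OF vector_space_field]) (simp add: L)
  also have "\<dots> = sweedler (\<lambda>k1 k2.
      sweedler (\<lambda>x y. sweedler (\<lambda>x1 x2. sweedler (\<lambda>y1 y2. T k1 k2 x1 x2 y1 y2) y) x) h) k"
    by (subst sweedler_swap, rule sweedler_cong, subst sweedler_swap, rule sweedler_cong, rule
        sweedler_swap)
  also have "\<dots> = sweedler (\<lambda>k1 k2.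
      sweedler (\<lambda>z y2. sweedler (\<lambda>x1 v. sweedler (\<lambda>x2 y1. T k1 k2 x1 x2 y1 y2) v) z) h) k"
    by (simp add: sweedler4_balanced[OF QT] sweedler4_middle_nested[OF QT])
  also have "\<dots>
      = sweedler (\<lambda>k1 k2. sweedler (\<lambda>z y2. f (gen z * gen k1 * a * gen (S (y2 * k2)))) h) k"
    unfolding T_def
    by (intro sweedler_cong) (use admissible_gen_antipode_absorb[OF A] in \<open>simp add: mult.assoc\<close>)
  also have "\<dots> = sweedler (\<lambda>x y. sweedler (\<lambda>u v. f (gen x * gen u * a * gen (S (y * v)))) k) h"
    by (rule sweedler_swap)
  finally show ?thesis .
qed

lemma admissible_act_act_left:
  assumes "a \<in> Apar sc \<Delta> S" and "admissible f"
  shows "f (act h (act k a)) = sweedler (\<lambda>x y. f (act x 1 * act (y * k) a)) h"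
  using admissible_act_act_merge[OF merge_inv_Apar[OF assms(1)] assms(2)] admissible_act_one_act[OF
      assms(2)]
  by simp

definition absorb_inv :: "('h, 'k) free_alg \<Rightarrow> bool" where
  "absorb_inv a \<longleftrightarrow>
      (\<forall>f x k. admissible f \<longrightarrow> f (gen x * act k a) =
      sweedler (\<lambda>p q. f (gen (x * p) * a * gen (S q))) k)"

lemma absorb_invD: "absorb_inv a \<Longrightarrow> admissible f \<Longrightarrow> f (gen x * act k a)
    = sweedler (\<lambda>p q. f (gen (x * p) * a * gen (S q))) k"
  unfolding absorb_inv_def by blast

lemma admissible_Fpar_merge:
  assumes A: "admissible f"
  shows "f (P * Fpar w * gen (S c) * X) = sweedler (\<lambda>y z. f (P * gen (S y) * gen (z * S c) * X)) w"
proof -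
  have "f (P * Fpar w * gen (S c) * X)
      = sweedler (\<lambda>y z. f (P * (gen (S y) * gen z * gen (S c)) * X)) w"
    unfolding Fpar_def by (simp add: times_sweedler_free admissible_sweedler[OF A] mult.assoc)
  also have "\<dots> = sweedler (\<lambda>y z. f (P * (gen (S y) * gen (z * S c)) * X)) w"
    by (rule admissible_merge_right[OF admissible_context[OF A]])
  finally show ?thesis by (simp add: mult.assoc)
qed

lemma admissible_antipode_eps_t_absorb:
  assumes A: "admissible f"
  shows "sweedler (\<lambda>e1 u. sweedler (\<lambda>e2 c2.
      sweedler (\<lambda>w1 w2. f (P * gen (S (w1 * e1)) * gen (w2 * e2 * S c2) * X)) w) u) c
    = sweedler (\<lambda>w1 w2. f (P * gen (S (w1 * c)) * gen w2 * X)) w"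
proof -
  note L = free_linear_simps admissible_linear_simps[OF A]
  define \<beta> where "\<beta> = (\<lambda>Y Z. sweedler (\<lambda>w1 w2. f (P * gen (S (w1 * Y)) * gen (w2 * Z) * X)) w)"
  have b\<beta>: "H_bilinear (*) \<beta>" unfolding \<beta>_def by (simp add: L)
  have "sweedler (\<lambda>e1 u. sweedler (\<lambda>e2 c2.
      sweedler (\<lambda>w1 w2. f (P * gen (S (w1 * e1)) * gen (w2 * e2 * S c2) * X)) w) u) c
    = sweedler (\<lambda>e1 u. \<beta> e1 (eps_t u)) c"
  proof (rule sweedler_cong)
    fix e1 u
    have "\<beta> e1 (eps_t u)
        = sweedler (\<lambda>w1 w2.
            sweedler (\<lambda>e2 c2. f (P * gen (S (w1 * e1)) * gen (w2 * (e2 * S c2)) * X)) u) w"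
      unfolding \<beta>_def comult_antipode_eps_t[symmetric]
      by (rule sweedler_cong)
          (simp only: sweedler_mult_left[symmetric] admissible_gen_sweedler[OF A])
    then show "sweedler
        (\<lambda>e2 c2. sweedler (\<lambda>w1 w2. f (P * gen (S (w1 * e1)) * gen (w2 * e2 * S c2) * X)) w) u
        = \<beta> e1 (eps_t u)"
      by (simp add: sweedler_swap[of _ w u] mult.assoc)
  qed
  also have "\<dots> = sweedler (\<lambda>p q. \<beta> (p * c) q) 1"
    by (rule sweedler_eps_t_right[OF vector_space_field b\<beta>])
  also have "\<dots> = sweedler (\<lambda>w1 w2.
      sweedler (\<lambda>p q. (\<lambda>U V. f (P * gen (S (U * c)) * gen V * X)) (w1 * p) (w2 * q)) 1) w"
    unfolding \<beta>_def by (subst sweedler_swap) (simp add: mult.assoc)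
  also have "\<dots> = sweedler (\<lambda>U V. f (P * gen (S (U * c)) * gen V * X)) w"
    by (rule sweedler_mult_unit[OF vector_space_field]) (simp add: L)
  finally show ?thesis .
qed

lemma absorb_inv_Fpar_step:
  assumes Gb: "absorb_inv b" and A: "admissible f"
  shows "sweedler (\<lambda>c1 v. sweedler (\<lambda>c2 c3. f (P * Fpar (w * c1) * gen (S c2) * act c3 b)) v) k
       = sweedler (\<lambda>c1 c2. f (P * Fpar (w * c1) * b * gen (S c2))) k"
proof -
  note L = free_linear_simps admissible_linear_simps[OF A] Epar_def Fpar_def act_def
  define T where "T
      = (\<lambda>e1 e2 c2 c3.
      sweedler (\<lambda>w1 w2. f (P * gen (S (w1 * e1)) * gen (w2 * e2 * S c2) * act c3 b)) w)"
  have QT: "H_quadrilinear T" unfolding T_def H_quadrilinear_def by (simp add: L)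
  have "sweedler (\<lambda>c1 v. sweedler (\<lambda>c2 c3. f (P * Fpar (w * c1) * gen (S c2) * act c3 b)) v) k
      = sweedler (\<lambda>c1 v.
          sweedler (\<lambda>c2 c3.
          sweedler (\<lambda>Y1 Y2. f (P * gen (S Y1) * gen (Y2 * S c2) * act c3 b)) (w * c1)) v) k"
    by (simp add: admissible_Fpar_merge[OF A])
  also have "\<dots> = sweedler (\<lambda>c1 v.
      sweedler (\<lambda>c2 c3.
      sweedler (\<lambda>w1 w2.
      sweedler (\<lambda>e1 e2. f (P * gen (S (w1 * e1)) * gen (w2 * e2 * S c2) * act c3 b)) c1) w) v) k"
    by (intro sweedler_cong sweedler_mult_arg[OF vector_space_field]) (simp add: L)
  also have "\<dots> = sweedler (\<lambda>c1 v. sweedler (\<lambda>e1 e2. sweedler (\<lambda>c2 c3. T e1 e2 c2 c3) v) c1) k"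
    unfolding T_def
    by (rule sweedler_cong, subst sweedler_swap, rule sweedler_cong, rule sweedler_swap)
  also have "\<dots> = sweedler (\<lambda>c' c3. sweedler (\<lambda>e1 u. sweedler (\<lambda>e2 c2. T e1 e2 c2 c3) u) c') k"
    by (simp add: sweedler4_balanced[OF QT] sweedler4_middle_nested[OF QT])
  also have "\<dots>
      = sweedler (\<lambda>c' c3. sweedler (\<lambda>w1 w2. f (P * gen (S (w1 * c')) * gen w2 * act c3 b)) w) k"
    unfolding T_def by (rule sweedler_cong, rule admissible_antipode_eps_t_absorb[OF A])
  also have "\<dots> = sweedler (\<lambda>c' c3.
      sweedler (\<lambda>w1 w2.
      sweedler (\<lambda>r s. f (P * gen (S (w1 * c')) * gen (w2 * r) * b * gen (S s))) c3) w) k"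
  proof (rule sweedler_cong, rule sweedler_cong)
    fix c' c3 w1 w2
    show "f (P * gen (S (w1 * c')) * gen w2 * act c3 b)
        = sweedler (\<lambda>r s. f (P * gen (S (w1 * c')) * gen (w2 * r) * b * gen (S s))) c3"
      using absorb_invD[OF Gb admissible_context_left[OF A, of "P * gen (S (w1 * c'))"], of w2 c3]
      by (simp add: mult.assoc)
  qed
  also have "\<dots> = sweedler (\<lambda>c' c3.
      sweedler (\<lambda>r s. sweedler (\<lambda>w1 w2. f (P * gen (S (w1 * c')) * gen (w2 * r) * b * gen (S s))) w)
      c3) k"
    by (rule sweedler_cong, rule sweedler_swap)
  also have "\<dots> = sweedler (\<lambda>y s.
      sweedler (\<lambda>c' r.
      sweedler (\<lambda>w1 w2. f (P * gen (S (w1 * c')) * gen (w2 * r) * b * gen (S s))) w) y) k"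
    by (rule sweedler_coassoc[OF vector_space_field, symmetric]) (simp add: L)
  also have "\<dots> = sweedler (\<lambda>y s. f (P * Fpar (w * y) * b * gen (S s))) k"
  proof (rule sweedler_cong)
    fix y s
    have bb: "H_bilinear (*) (\<lambda>U V. f (P * gen (S U) * gen V * b * gen (S s)))" by (simp add: L)
    show "sweedler
        (\<lambda>c' r. sweedler (\<lambda>w1 w2. f (P * gen (S (w1 * c')) * gen (w2 * r) * b * gen (S s))) w) y = f
        (P * Fpar (w * y) * b * gen (S s))"
      unfolding Fpar_def[of "w * y"]
      by (simp add: times_sweedler_free admissible_sweedler[OF A] mult.assoc
          sweedler_mult_arg[OF vector_space_field bb, simplified mult.assoc]
          sweedler_swap[of _ y w])
  qed
  finally show ?thesis .
qed

lemma absorb_inv_one: "absorb_inv 1"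
  unfolding absorb_inv_def
proof (intro allI impI)
  fix f x k assume A: "admissible f"
  show "f (gen x * act k 1) = sweedler (\<lambda>p q. f (gen (x * p) * 1 * gen (S q))) k"
    using admissible_merge_left[OF A, of x k]
    by (simp add: act_one Epar_def times_sweedler_free admissible_sweedler[OF A] mult.assoc)
qed

lemma absorb_inv_add: "absorb_inv p \<Longrightarrow> absorb_inv q \<Longrightarrow> absorb_inv (p + q)"
  unfolding absorb_inv_def
  by (auto simp: act_add distrib_left distrib_right admissible_add sweedler_add_fun)

lemma absorb_inv_fsc: "absorb_inv p \<Longrightarrow> absorb_inv (fsc c p)"
  unfolding absorb_inv_def
  by (simp add: act_fsc fsc_mult_left fsc_mult_right admissible_fsc sweedler_mult_left)

lemma absorb_inv_cong:
  assumes G: "absorb_inv q" and E: "par_eq sc \<Delta> S p q"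
  shows "absorb_inv p"
  unfolding absorb_inv_def
proof (intro allI impI)
  fix f x k assume A: "admissible f"
  have "f (gen x * act k p) = sweedler (\<lambda>a b. f (gen x * (gen a * p * gen (S b)))) k"
    by (simp add: act_def times_sweedler_free admissible_sweedler[OF A])
  also have "\<dots> = sweedler (\<lambda>a b. f (gen x * (gen a * q * gen (S b)))) k"
    by (rule sweedler_cong) (use par_eqD[OF E A, of "gen x * gen a" "gen (S b)"
      for a b] in \<open>simp add: mult.assoc\<close>)
  also have "\<dots> = f (gen x * act k q)"
    by (simp add: act_def times_sweedler_free admissible_sweedler[OF A])
  also have "\<dots> = sweedler (\<lambda>a b. f (gen (x * a) * q * gen (S b))) k" by (rule absorb_invD[OF G A])
  also have "\<dots> = sweedler (\<lambda>a b. f (gen (x * a) * p * gen (S b))) k"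
    by (rule sweedler_cong) (simp add: par_eqD[OF E A])
  finally show "f (gen x * act k p) = sweedler (\<lambda>a b. f (gen (x * a) * p * gen (S b))) k" .
qed

lemma absorb_inv_Epar: "absorb_inv (Epar m)"
  unfolding absorb_inv_def
proof (intro allI impI)
  fix f x k assume A: "admissible f"
  note L = free_linear_simps admissible_linear_simps[OF A] Epar_def Fpar_def
  have "f (gen x * act k (Epar m)) = sweedler (\<lambda>k1 k2. f (gen x * (Epar (k1 * m) * Epar k2))) k"
    using admissible_act_Epar[OF admissible_context_left[OF A, of "gen x"], of k m] by simp
  also have "\<dots>
      = sweedler (\<lambda>k1 k2. sweedler (\<lambda>u v. f (gen x * gen u * gen (S v) * Epar k2)) (k1 * m)) k"
    by (rule sweedler_cong) (simp add: Epar_def[of "k1 * m"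
      for k1] times_sweedler_free admissible_sweedler[OF A] mult.assoc)
  also have "\<dots>
      = sweedler (\<lambda>k1 k2. sweedler (\<lambda>u v. f (gen (x * u) * gen (S v) * Epar k2)) (k1 * m)) k"
    by (rule sweedler_cong, rule admissible_merge_left[OF admissible_context_right[OF A]])
  also have "\<dots> = sweedler (\<lambda>k1 k2.
      sweedler (\<lambda>p q. sweedler (\<lambda>m1 m2. f (gen (x * (p * m1)) * gen (S (q * m2)) * Epar k2)) m) k1)
      k"
    by (rule sweedler_cong, rule sweedler_mult_arg[OF vector_space_field]) (simp add: L)
  finally have LHS: "f (gen x * act k (Epar m))
      = sweedler (\<lambda>k1 k2.
      sweedler (\<lambda>p q. sweedler (\<lambda>m1 m2. f (gen (x * (p * m1)) * gen (S (q * m2)) * Epar k2)) m) k1)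
      k" .
  have "sweedler (\<lambda>p q. f (gen (x * p) * Epar m * gen (S q))) k
      = sweedler (\<lambda>p q. sweedler (\<lambda>m1 m2. f (gen (x * p) * gen m1 * gen (S m2) * gen (S q))) m) k"
    by (rule sweedler_cong)
        (simp add: Epar_def[of m] times_sweedler_free admissible_sweedler[OF A] mult.assoc)
  also have "\<dots>
      = sweedler (\<lambda>p q. sweedler (\<lambda>m1 m2. f (gen (x * p * m1) * gen (S m2) * gen (S q))) m) k"
    by (rule sweedler_cong, rule admissible_merge_left[OF admissible_context_right[OF A]])
  also have "\<dots> = sweedler (\<lambda>p q.
      sweedler (\<lambda>m1 m2. sweedler (\<lambda>q1 q2. f (gen (x * p * m1) * gen (S (q1 * m2)) * Epar q2)) q) m)
      k"
  proof (rule sweedler_cong, rule sweedler_cong)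
    fix p q m1 m2
    show "f (gen (x * p * m1) * gen (S m2) * gen (S q))
        = sweedler (\<lambda>q1 q2. f (gen (x * p * m1) * gen (S (q1 * m2)) * Epar q2)) q"
      using admissible_antipode_pair[OF admissible_context_left[OF A, of "gen (x * p * m1)"],
          of m2 q] by (simp add: mult.assoc)
  qed
  also have "\<dots> = sweedler (\<lambda>p q.
      sweedler (\<lambda>q1 q2. sweedler (\<lambda>m1 m2. f (gen (x * p * m1) * gen (S (q1 * m2)) * Epar q2)) m) q)
      k"
    by (rule sweedler_cong, rule sweedler_swap)
  also have "\<dots> = sweedler (\<lambda>k1 k2.
      sweedler (\<lambda>p q1. sweedler (\<lambda>m1 m2. f (gen (x * p * m1) * gen (S (q1 * m2)) * Epar k2)) m) k1)
      k"
    by (rule sweedler_coassoc[OF vector_space_field, symmetric]) (simp add: L)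
  finally show "f (gen x * act k (Epar m))
      = sweedler (\<lambda>p q. f (gen (x * p) * Epar m * gen (S q))) k"
    using LHS by (simp add: mult.assoc)
qed

lemma split_inv_mult_arg:
  assumes Pa: "split_inv a" and A: "admissible f"
  shows "f (gen (x * p) * a * Z)
      = sweedler (\<lambda>x1 x2. sweedler (\<lambda>p1 p2. f (gen (x1 * p1) * a * Fpar (x2 * p2) * Z)) p) x"
proof -
  note L = free_linear_simps admissible_linear_simps[OF A] Epar_def Fpar_def
  have "f (gen (x * p) * a * Z) = sweedler (\<lambda>X Y. f (gen X * a * Fpar Y * Z)) (x * p)"
    using split_invD[OF Pa admissible_context_right[OF A, of Z], of "x * p"] by simp
  also have "\<dots>
      = sweedler (\<lambda>x1 x2. sweedler (\<lambda>p1 p2. f (gen (x1 * p1) * a * Fpar (x2 * p2) * Z)) p) x"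
    by (rule sweedler_mult_arg[OF vector_space_field]) (simp add: L)
  finally show ?thesis .
qed

lemma admissible_gen_act_mult:
  assumes Ga: "absorb_inv a" and Gb: "absorb_inv b" and Pa: "split_inv a" and A: "admissible f"
  shows "f (gen x * act k (a * b)) = sweedler (\<lambda>x1 x2. sweedler (\<lambda>p1 w.
      sweedler (\<lambda>c1 c2. f (gen (x1 * p1) * a * Fpar (x2 * c1) * b * gen (S c2))) w) k) x"
proof -
  note L = free_linear_simps admissible_linear_simps[OF A] Epar_def Fpar_def act_def
  define T where "T
      = (\<lambda>x1 x2 p1 p2 q k2. f (gen (x1 * p1) * a * Fpar (x2 * p2) * gen (S q) * act k2 b))"
  have QT: "H_quadrilinear (T x1 x2)" for x1 x2 unfolding T_def H_quadrilinear_def by (simp add: L)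
  have "f (gen x * act k (a * b)) = sweedler (\<lambda>k1 k2. f (gen x * (act k1 a * act k2 b))) k"
    using admissible_act_mult[OF Pa admissible_context_left[OF A, of "gen x"], of k b] by simp
  also have "\<dots>
      = sweedler (\<lambda>k1 k2. sweedler (\<lambda>p q. f (gen (x * p) * a * gen (S q) * act k2 b)) k1) k"
  proof (rule sweedler_cong)
    fix k1 k2
    show "f (gen x * (act k1 a * act k2 b))
        = sweedler (\<lambda>p q. f (gen (x * p) * a * gen (S q) * act k2 b)) k1"
      using absorb_invD[OF Ga admissible_context_right[OF A, of "act k2 b"], of x k1]
      by (simp add: mult.assoc)
  qed
  also have "\<dots> = sweedler (\<lambda>p v. sweedler (\<lambda>q k2. f (gen (x * p) * a * gen (S q) * act k2 b)) v) k"
    by (rule sweedler_coassoc[OF vector_space_field]) (simp add: L)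
  also have "\<dots> = sweedler (\<lambda>p v.
      sweedler (\<lambda>q k2. sweedler (\<lambda>x1 x2. sweedler (\<lambda>p1 p2. T x1 x2 p1 p2 q k2) p) x) v) k"
  proof (rule sweedler_cong, rule sweedler_cong)
    fix p v q k2
    show "f (gen (x * p) * a * gen (S q) * act k2 b)
        = sweedler (\<lambda>x1 x2. sweedler (\<lambda>p1 p2. T x1 x2 p1 p2 q k2) p) x"
      unfolding T_def using split_inv_mult_arg[OF Pa A, of x p "gen (S q) * act k2 b"]
      by (simp add: mult.assoc)
  qed
  also have "\<dots> = sweedler (\<lambda>p v.
      sweedler (\<lambda>x1 x2. sweedler (\<lambda>q k2. sweedler (\<lambda>p1 p2. T x1 x2 p1 p2 q k2) p) v) x) k"
    by (rule sweedler_cong, rule sweedler_swap)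
  also have "\<dots> = sweedler (\<lambda>x1 x2.
      sweedler (\<lambda>p v. sweedler (\<lambda>q k2. sweedler (\<lambda>p1 p2. T x1 x2 p1 p2 q k2) p) v) k) x"
    by (rule sweedler_swap)
  also have "\<dots> = sweedler (\<lambda>x1 x2.
      sweedler (\<lambda>p v. sweedler (\<lambda>p1 p2. sweedler (\<lambda>q k2. T x1 x2 p1 p2 q k2) v) p) k) x"
    by (rule sweedler_cong, rule sweedler_cong, rule sweedler_swap)
  also have "\<dots> = sweedler (\<lambda>x1 x2. sweedler4 (T x1 x2) k) x"
    by (rule sweedler_cong, rule sweedler4_balanced[OF QT])
  also have "\<dots> = sweedler (\<lambda>x1 x2. sweedler (\<lambda>p1 w.
      sweedler (\<lambda>c1 c2. f (gen (x1 * p1) * a * Fpar (x2 * c1) * b * gen (S c2))) w) k) x"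
    unfolding sweedler4_def T_def
    by (rule sweedler_cong, rule sweedler_cong, rule absorb_inv_Fpar_step[OF Gb A])
  finally show ?thesis .
qed

lemma admissible_gen_mult:
  assumes Pa: "split_inv a" and A: "admissible f"
  shows "sweedler (\<lambda>k1 k2. f (gen (x * k1) * (a * b) * gen (S k2))) k
      = sweedler (\<lambda>x1 x2. sweedler (\<lambda>p1 w.
      sweedler (\<lambda>c1 c2. f (gen (x1 * p1) * a * Fpar (x2 * c1) * b * gen (S c2))) w) k) x"
proof -
  have "sweedler (\<lambda>k1 k2. f (gen (x * k1) * (a * b) * gen (S k2))) k
      = sweedler (\<lambda>k1 k2.
          sweedler (\<lambda>x1 x2.
          sweedler (\<lambda>p1 p2. f (gen (x1 * p1) * a * Fpar (x2 * p2) * (b * gen (S k2)))) k1) x) k"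
  proof (rule sweedler_cong)
    fix k1 k2
    show "f (gen (x * k1) * (a * b) * gen (S k2))
        = sweedler (\<lambda>x1 x2.
        sweedler (\<lambda>p1 p2. f (gen (x1 * p1) * a * Fpar (x2 * p2) * (b * gen (S k2)))) k1) x"
      using split_inv_mult_arg[OF Pa A, of x k1 "b * gen (S k2)"] by (simp add: mult.assoc)
  qed
  also have "\<dots> = sweedler (\<lambda>x1 x2.
      sweedler (\<lambda>p1 w.
      sweedler (\<lambda>c1 c2. f (gen (x1 * p1) * a * Fpar (x2 * c1) * (b * gen (S c2)))) w) k) x"
    by (subst sweedler_swap, rule sweedler_cong, rule sweedler_coassoc[OF vector_space_field])
      (simp add: free_linear_simps admissible_linear_simps[OF A] Fpar_def)
  finally show ?thesis by (simp add: mult.assoc)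
qed

lemma absorb_inv_mult:
  assumes "absorb_inv a" and "absorb_inv b" and "split_inv a"
  shows "absorb_inv (a * b)"
  unfolding absorb_inv_def
  using admissible_gen_act_mult[OF assms] admissible_gen_mult[OF assms(3)] by simp

lemma absorb_inv_Apar: "a \<in> Apar sc \<Delta> S \<Longrightarrow> absorb_inv a"
proof (induction rule: Apar.induct)
  case (E h) show ?case by (simp add: Eh_eq_Epar absorb_inv_Epar)
next
  case unit show ?case by (simp add: funit_eq_one absorb_inv_one)
next
  case (add p q) thus ?case by (intro absorb_inv_add add.IH)
next
  case (smult p c) thus ?case by (simp add: absorb_inv_fsc smult.IH)
next
  case (mult p q) thus ?case by (simp add: fmul_eq_times absorb_inv_mult split_inv_Apar mult.IH)
next
  case (cong q p) thus ?case using absorb_inv_cong by blast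
qed

lemma admissible_act_act_absorb:
  assumes Ga: "absorb_inv a" and A: "admissible f"
  shows "f (act h (act k a))
    = sweedler (\<lambda>k1 k2. sweedler (\<lambda>x y. f (gen (x * k1) * a * gen (S k2) * gen (S y))) h) k"
proof -
  have "f (act h (act k a)) = sweedler (\<lambda>x y. f (gen x * act k a * gen (S y))) h"
    by (rule admissible_act[OF A])
  also have "\<dots> = sweedler (\<lambda>x y. sweedler (\<lambda>p q. f (gen (x * p) * a * gen (S q) * gen (S y))) k) h"
  proof (rule sweedler_cong)
    fix x y
    show "f (gen x * act k a * gen (S y))
        = sweedler (\<lambda>p q. f (gen (x * p) * a * gen (S q) * gen (S y))) k"
      using absorb_invD[OF Ga admissible_context_right[OF A, of "gen (S y)"], of x k]
      by (simp add: mult.assoc)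
  qed
  finally show ?thesis by (simp add: sweedler_swap[of _ k h])
qed

lemma admissible_antipode_gen_absorb:
  assumes A: "admissible f"
  shows "sweedler (\<lambda>x v. sweedler (\<lambda>y z. f (P * gen (S x) * gen (y * S z))) v) w
      = f (P * gen (S w))"
proof -
  define \<beta> where "\<beta> = (\<lambda>X Y. f (P * gen (S X) * gen Y))"
  have "H_bilinear (*) \<beta>"
    unfolding \<beta>_def by (simp add: free_linear_simps admissible_linear_simps[OF A])
  have "sweedler (\<lambda>x v. sweedler (\<lambda>y z. f (P * gen (S x) * gen (y * S z))) v) w
      = sweedler (\<lambda>x v. \<beta> x (eps_t v)) w"
    unfolding \<beta>_def comult_antipode_eps_t[symmetric]
    by (simp only: admissible_gen_sweedler[OF A, where Q=1, simplified])
  also have "\<dots> = sweedler (\<lambda>p q. \<beta> (p * w) q) 1"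
    by (rule sweedler_eps_t_right[OF vector_space_field]) fact
  also have "\<dots> = sweedler (\<lambda>p q. f (P * (gen (S w * S p) * gen q) * 1)) 1"
    unfolding \<beta>_def by (simp add: antipode_mult mult.assoc)
  also have "\<dots> = sweedler (\<lambda>p q. f (P * (gen (S w) * gen (S p) * gen q) * 1)) 1"
    by (rule admissible_merge_left_S[OF admissible_context[OF A], symmetric])
  also have "\<dots> = f (P * gen (S w))"
    using admissible_Fpar_one[OF admissible_context[OF A, of "P * gen (S w)" 1]]
    by (simp add: Fpar_def times_sweedler_free admissible_sweedler[OF A] mult.assoc)
  finally show ?thesis .
qed

lemma admissible_act_mult_act_one:
  assumes A: "admissible f"
  shows "sweedler (\<lambda>x y. f (act (x * k) a * act y 1)) h
    = sweedler (\<lambda>k1 k2. sweedler (\<lambda>x y. f (gen (x * k1) * a * gen (S k2) * gen (S y))) h) k"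
proof -
  note L = free_linear_simps admissible_linear_simps[OF A]
  define T where "T
      = (\<lambda>k1 k2 x1 x2 y1 y2. f (gen (x1 * k1) * a * gen (S (x2 * k2)) * gen y1 * gen (S y2)))"
  define T' where "T'
      = (\<lambda>k1 k2 x1 x2 y1 y2. f (gen (x1 * k1) * a * gen (S k2) * gen (S x2) * gen (y1 * S y2)))"
  have QT: "H_quadrilinear (T k1 k2)" for k1 k2 unfolding T_def H_quadrilinear_def by (simp add: L)
  have QT': "H_quadrilinear (T' k1 k2)" for k1 k2 unfolding T'_def H_quadrilinear_def
    by (simp add: L)
  have "sweedler (\<lambda>x y. f (act (x * k) a * act y 1)) h
      = sweedler (\<lambda>x y.
          sweedler (\<lambda>U V. sweedler (\<lambda>y1 y2. f (gen U * a * gen (S V) * gen y1 * gen (S y2))) y)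
          (x * k)) h"
    by (rule sweedler_cong)
      (simp add: act_one Epar_def act_def times_sweedler_free admissible_sweedler[OF A] mult.assoc;
        rule sweedler_swap)
  also have "\<dots> = sweedler (\<lambda>x y.
      sweedler (\<lambda>x1 x2. sweedler (\<lambda>k1 k2. sweedler (\<lambda>y1 y2. T k1 k2 x1 x2 y1 y2) y) k) x) h"
    unfolding T_def
    by (rule sweedler_cong, rule sweedler_mult_arg[OF vector_space_field]) (simp add: L)
  also have "\<dots> = sweedler (\<lambda>k1 k2.
      sweedler (\<lambda>x y. sweedler (\<lambda>x1 x2. sweedler (\<lambda>y1 y2. T k1 k2 x1 x2 y1 y2) y) x) h) k"
    by (subst sweedler_swap, rule sweedler_cong, rule sweedler_swap)
  also have "\<dots> = sweedler (\<lambda>k1 k2.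
      sweedler (\<lambda>z y2. sweedler (\<lambda>x1 v. sweedler (\<lambda>x2 y1. T k1 k2 x1 x2 y1 y2) v) z) h) k"
    by (simp add: sweedler4_balanced[OF QT] sweedler4_middle_nested[OF QT])
  also have "\<dots> = sweedler (\<lambda>k1 k2.
      sweedler (\<lambda>z y2. sweedler (\<lambda>x1 v. sweedler (\<lambda>x2 y1. T' k1 k2 x1 x2 y1 y2) v) z) h) k"
  proof (rule sweedler_cong, rule sweedler_cong, rule sweedler_cong)
    fix k1 k2 z y2 x1 v
    have "sweedler (\<lambda>x2 y1. T k1 k2 x1 x2 y1 y2) v
        = sweedler (\<lambda>x2 y1. f ((gen (x1 * k1) * a) * (gen (S k2 * S x2) * gen y1) * gen (S y2))) v"
      unfolding T_def by (simp add: antipode_mult mult.assoc)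
    also have "\<dots> = sweedler (\<lambda>x2 y1. f
        ((gen (x1 * k1) * a) * (gen (S k2) * gen (S x2) * gen y1) * gen (S y2))) v"
      by (rule admissible_merge_left_S[OF admissible_context[OF A], symmetric])
    also have "\<dots> = sweedler (\<lambda>x2 y1. f
        ((gen (x1 * k1) * a * gen (S k2)) * (gen (S x2) * gen y1 * gen (S y2)) * 1)) v"
      by (simp add: mult.assoc)
    also have "\<dots> = sweedler (\<lambda>x2 y1. f
        ((gen (x1 * k1) * a * gen (S k2)) * (gen (S x2) * gen (y1 * S y2)) * 1)) v"
      by (rule admissible_merge_right[OF admissible_context[OF A]])
    also have "\<dots> = sweedler (\<lambda>x2 y1. T' k1 k2 x1 x2 y1 y2) v"
      unfolding T'_def by (simp add: mult.assoc)
    finally show "sweedler (\<lambda>x2 y1. T k1 k2 x1 x2 y1 y2) v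
        = sweedler (\<lambda>x2 y1. T' k1 k2 x1 x2 y1 y2) v" .
  qed
  also have "\<dots> = sweedler (\<lambda>k1 k2. sweedler4 (T' k1 k2) h) k"
    by (rule sweedler_cong, rule sweedler4_middle_nested[OF QT'])
  also have "\<dots>
      = sweedler (\<lambda>k1 k2. sweedler (\<lambda>x1 w. f (gen (x1 * k1) * a * gen (S k2) * gen (S w))) h) k"
    unfolding sweedler4_def T'_def
    by (rule sweedler_cong, rule sweedler_cong, rule admissible_antipode_gen_absorb[OF A])
  finally show ?thesis .
qed

lemma admissible_act_act_right:
  assumes "a \<in> Apar sc \<Delta> S" and "admissible f"
  shows "f (act h (act k a)) = sweedler (\<lambda>x y. f (act (x * k) a * act y 1)) h"
  using admissible_act_act_absorb[OF absorb_inv_Apar[OF assms(1)] assms(2)]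
      admissible_act_mult_act_one[OF assms(2)]
  by simp

end

context weak_hopf
begin

lemma par_eq_refl: "par_eq sc \<Delta> S p p"
  by (simp add: par_eq_def fideal.zero)

lemma par_act_in_Apar: "a \<in> Apar sc \<Delta> S \<Longrightarrow> par_act \<Delta> S h a \<in> Apar sc \<Delta> S"
  by (simp add: par_act_eq_act act_in_Apar)

lemma par_act_par_eq:
  "par_eq sc \<Delta> S a a' \<Longrightarrow> par_eq sc \<Delta> S (par_act \<Delta> S h a) (par_act \<Delta> S h a')"
  by (rule par_eqI) (simp add: par_act_eq_act admissible_act par_eqD)

lemma par_act_add_left:
  "par_eq sc \<Delta> S (par_act \<Delta> S (h + h') a) (par_act \<Delta> S h a + par_act \<Delta> S h' a)"
proof (rule par_eqI)
  fix f assume A: "admissible f"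
  have "H_bilinear (*) (\<lambda>x y. f (gen x * a * gen (S y)))"
    by (simp add: free_linear_simps admissible_linear_simps[OF A])
  then show "f (par_act \<Delta> S (h + h') a) = f (par_act \<Delta> S h a + par_act \<Delta> S h' a)"
    by (simp add: par_act_eq_act admissible_act[OF A] admissible_add[OF A] sweedler_linear_arg)
qed

lemma par_act_scale_left: "par_eq sc \<Delta> S (par_act \<Delta> S (sc c h) a) (fsc c (par_act \<Delta> S h a))"
proof (rule par_eqI)
  fix f assume A: "admissible f"
  have "H_bilinear (*) (\<lambda>x y. f (gen x * a * gen (S y)))"
    by (simp add: free_linear_simps admissible_linear_simps[OF A])
  then show "f (par_act \<Delta> S (sc c h) a) = f (fsc c (par_act \<Delta> S h a))"
    by (simp add: par_act_eq_act admissible_act[OF A] admissible_fsc[OF A] sweedler_linear_arg)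
qed

lemma par_act_add_right:
  fixes a b :: "('h, 'k) free_alg"
  shows "par_act \<Delta> S h (a + b) = par_act \<Delta> S h a + par_act \<Delta> S h b"
  by (simp add: par_act_eq_act act_add)

lemma par_act_fsc_right:
  fixes a :: "('h, 'k) free_alg"
  shows "par_act \<Delta> S h (fsc c a) = fsc c (par_act \<Delta> S h a)"
  by (simp add: par_act_eq_act act_fsc)

lemma par_act_fmul:
  "a \<in> Apar sc \<Delta> S \<Longrightarrow>
    par_eq sc \<Delta> S (par_act \<Delta> S h (fmul a b))
        (\<Sum>(x, y)\<leftarrow>\<Delta> h. fmul (par_act \<Delta> S x a) (par_act \<Delta> S y b))"
  by (rule par_eqI)
    (simp add: par_act_eq_act fmul_eq_times admissible_act_mult split_inv_Apar
      sweedler_def[symmetric] admissible_sweedler)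

lemma par_act_one: "a \<in> Apar sc \<Delta> S \<Longrightarrow> par_eq sc \<Delta> S (par_act \<Delta> S 1 a) a"
  by (rule par_eqI) (simp add: par_act_eq_act admissible_act_one)

lemma par_act_act_left:
  "a \<in> Apar sc \<Delta> S \<Longrightarrow>
    par_eq sc \<Delta> S (par_act \<Delta> S h (par_act \<Delta> S k a))
      (\<Sum>(x, y)\<leftarrow>\<Delta> h. fmul (par_act \<Delta> S x funit) (par_act \<Delta> S (y * k) a))"
  by (rule par_eqI)
    (simp add: par_act_eq_act fmul_eq_times funit_eq_one admissible_act_act_left
      sweedler_def[symmetric] admissible_sweedler)

lemma par_act_act_right:
  "a \<in> Apar sc \<Delta> S \<Longrightarrow>
    par_eq sc \<Delta> S (par_act \<Delta> S h (par_act \<Delta> S k a))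
      (\<Sum>(x, y)\<leftarrow>\<Delta> h. fmul (par_act \<Delta> S (x * k) a) (par_act \<Delta> S y funit))"
  by (rule par_eqI)
    (simp add: par_act_eq_act fmul_eq_times funit_eq_one admissible_act_act_right
      sweedler_def[symmetric] admissible_sweedler)

end

theorem proposition4p6:
  fixes sc :: "'k::field \<Rightarrow> 'h::{ring,monoid_mult} \<Rightarrow> 'h"
    and \<Delta> :: "'h \<Rightarrow> ('h \<times> 'h) list"
    and \<epsilon> :: "'h \<Rightarrow> 'k"
    and S :: "'h \<Rightarrow> 'h"
  assumes "weak_hopf_algebra sc \<Delta> \<epsilon> S"
  shows "sym_partial_module_algebra sc \<Delta> (Apar sc \<Delta> S) (par_eq sc \<Delta> S) fsc fmul funit (par_act \<Delta> S)"
proof -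
  interpret weak_hopf sc \<Delta> \<epsilon> S
    using assms by (rule weak_hopf_algebra_imp_weak_hopf)
  show ?thesis
    unfolding sym_partial_module_algebra_def
    by (simp add: par_act_in_Apar par_act_par_eq par_act_add_left par_act_scale_left
        par_act_add_right par_act_fsc_right par_eq_refl par_act_fmul par_act_one
        par_act_act_left par_act_act_right)
qed

end
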